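(* Let $\mathcal E$ be the supermanifold with coordinates $(x,y,u,u_x,u_y,\lambda\,|\,\nu,\tau,u_\nu,u_\tau,\theta,\phi)$ (first six even, last six odd), and let $\mathcal H$ be the rank $(3|4)$ distribution $\mathcal H=\langle D_x,D_y,\partial_\lambda\,|\,D_\nu,D_\tau,\partial_\theta,\partial_\phi\rangle$, where $D_x=\partial_x+u_x\partial_u+(\tfrac{\lambda^3}{3}+2\theta\phi\lambda)\partial_{u_x}+(\tfrac{\lambda^2}{2}+\theta\phi)\partial_{u_y}+\lambda\phi\partial_{u_\nu}-\lambda\theta\partial_{u_\tau}$, $D_y=\partial_y+u_y\partial_u+(\tfrac{\lambda^2}{2}+\theta\phi)\partial_{u_x}+\lambda\partial_{u_y}+\phi\partial_{u_\nu}-\theta\partial_{u_\tau}$, $D_\nu=\partial_\nu+u_\nu\partial_u+\lambda\phi\partial_{u_x}+\phi\partial_{u_y}-\lambda\partial_{u_\tau}$, $D_\tau=\partial_\tau+u_\tau\partial_u-\lambda\theta\partial_{u_x}-\theta\partial_{u_y}+\lambda\partial_{u_\nu}$. Then the Cauchy characteristic space $Ch(\mathcal H)=\{\mathbf X\in\Gamma(\mathcal H):\mathcal L_{\mathbf X}\mathcal H\subset\mathcal H\}$ is spanned (over superfunctions) by $\mathbf C=D_x-\lambda D_y-\theta D_\nu-\phi D_\tau$.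
   Context: $(\mathcal E,\mathcal H)$ is the $G(3)$-contact super-PDE system $u_{xx}=\tfrac13u_{yy}^3+2u_{yy}u_{y\nu}u_{y\tau}$, $u_{xy}=\tfrac12u_{yy}^2+u_{y\nu}u_{y\tau}$, $u_{x\nu}=u_{yy}u_{y\nu}$, $u_{x\tau}=u_{yy}u_{y\tau}$, $u_{\nu\tau}=-u_{yy}$ parametrized by $\lambda=u_{yy}$, $\theta=-u_{y\tau}$, $\phi=u_{y\nu}$, with the restriction of the contact system of $J^2(\mathbb C^{2|2},\mathbb C^{1|0})$. *)

theory Defs
  imports "HOL-Analysis.Analysis"
begin

text \<open>Even coordinates (indices 0..5): x, y, u, u_x, u_y, lambda.
  Odd coordinates  (indices 0..5): nu, tau, u_nu, u_tau, theta, phi.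
  A superfunction is F = sum over S subset of {0..5} of F_S(even coords) xi_S,
  where xi_S is the product of the odd coordinates in S in increasing order.
  A point of the even part is a map nat => complex (only entries 0..5 matter).\<close>

type_synonym pt = "nat \<Rightarrow> complex"
type_synonym sfun = "nat set \<Rightarrow> pt \<Rightarrow> complex"
type_synonym vf = "nat \<Rightarrow> sfun"

definition pd :: "nat \<Rightarrow> (pt \<Rightarrow> complex) \<Rightarrow> pt \<Rightarrow> complex" where
  "pd i f x = deriv (\<lambda>z. f (x(i := z))) (x i)"

fun iterpd :: "nat list \<Rightarrow> (pt \<Rightarrow> complex) \<Rightarrow> pt \<Rightarrow> complex" where
  "iterpd [] f = f"
| "iterpd (i # is) f = pd i (iterpd is f)"

text \<open>Holomorphic (entire) functions of the 6 even coordinates: all iterated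
  partial derivatives exist as complex derivatives in each variable
  (equivalent to holomorphy by Hartogs' theorem).\<close>
definition hol :: "(pt \<Rightarrow> complex) \<Rightarrow> bool" where
  "hol f \<longleftrightarrow> (\<forall>x. f x = f (\<lambda>i. if i < 6 then x i else 0)) \<and>
     (\<forall>is. \<forall>i<6. \<forall>x. (\<lambda>z. iterpd is f (x(i := z))) field_differentiable at (x i))"

definition SF :: "sfun set" where
  "SF = {F. (\<forall>S. \<not> S \<subseteq> {..<6} \<longrightarrow> F S = (\<lambda>_. 0)) \<and> (\<forall>S. hol (F S))}"

text \<open>Sign of xi_A xi_B = sgn2 A B xi_(A union B) for disjoint A, B.\<close>
definition sgn2 :: "nat set \<Rightarrow> nat set \<Rightarrow> complex" where
  "sgn2 A B = (-1) ^ card {(a, b). a \<in> A \<and> b \<in> B \<and> b < a}"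

definition smult :: "sfun \<Rightarrow> sfun \<Rightarrow> sfun" where
  "smult F G = (\<lambda>S x. \<Sum>A\<in>Pow S. sgn2 A (S - A) * F A x * G (S - A) x)"

definition sadd :: "sfun \<Rightarrow> sfun \<Rightarrow> sfun" where
  "sadd F G = (\<lambda>S x. F S x + G S x)"

definition sscale :: "complex \<Rightarrow> sfun \<Rightarrow> sfun" where
  "sscale c F = (\<lambda>S x. c * F S x)"

definition sconst :: "complex \<Rightarrow> sfun" where
  "sconst c = (\<lambda>S x. if S = {} then c else 0)"

definition ecoord :: "nat \<Rightarrow> sfun" where
  "ecoord i = (\<lambda>S x. if S = {} then x i else 0)"

definition ocoord :: "nat \<Rightarrow> sfun" where
  "ocoord j = (\<lambda>S x. if S = {j} then 1 else 0)"

text \<open>Coordinate derivations: index k < 6 is d/d(even coord k),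
  index 6 + j (j < 6) is the left derivative d/d(odd coord j).\<close>
definition even_d :: "nat \<Rightarrow> sfun \<Rightarrow> sfun" where
  "even_d i F = (\<lambda>S. pd i (F S))"

definition odd_d :: "nat \<Rightarrow> sfun \<Rightarrow> sfun" where
  "odd_d j F = (\<lambda>S x. if j \<notin> S \<and> j < 6
       then (-1) ^ card {s \<in> S. s < j} * F (insert j S) x else 0)"

definition dcoord :: "nat \<Rightarrow> sfun \<Rightarrow> sfun" where
  "dcoord k F = (if k < 6 then even_d k F else odd_d (k - 6) F)"

text \<open>A vector field X = sum_{k<12} X k * d_k (coefficients on the left).\<close>
definition vapply :: "vf \<Rightarrow> sfun \<Rightarrow> sfun" where
  "vapply X g = (\<lambda>S x. \<Sum>k<12. smult (X k) (dcoord k g) S x)"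

definition sproj :: "nat \<Rightarrow> sfun \<Rightarrow> sfun" where
  "sproj p F = (\<lambda>S. if even (card S) = (p = 0) then F S else (\<lambda>_. 0))"

definition vpart :: "nat \<Rightarrow> vf \<Rightarrow> vf" where
  "vpart p X = (\<lambda>k. sproj ((p + (if k < 6 then 0 else 1)) mod 2) (X k))"

text \<open>Supercommutator of homogeneous fields of parities p, q:
  [A,B]_k = A(B_k) - (-1)^(pq) B(A_k); extended bilinearly.\<close>
definition hbr :: "nat \<Rightarrow> nat \<Rightarrow> vf \<Rightarrow> vf \<Rightarrow> vf" where
  "hbr p q A B = (\<lambda>k S x. vapply A (B k) S x - (-1) ^ (p * q) * vapply B (A k) S x)"

definition sbr :: "vf \<Rightarrow> vf \<Rightarrow> vf" where
  "sbr X Y = (\<lambda>k S x. \<Sum>p<2. \<Sum>q<2. hbr p q (vpart p X) (vpart q Y) k S x)"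

definition vfl :: "(sfun \<times> nat) list \<Rightarrow> vf" where
  "vfl l = (\<lambda>k S x. sum_list (map (\<lambda>(c, j). if j = k then c S x else 0) l))"

definition vscale :: "sfun \<Rightarrow> vf \<Rightarrow> vf" where
  "vscale f V = (\<lambda>k. smult f (V k))"

abbreviation "c_ux \<equiv> ecoord 3"
abbreviation "c_uy \<equiv> ecoord 4"
abbreviation "c_lam \<equiv> ecoord 5"
abbreviation "c_unu \<equiv> ocoord 2"
abbreviation "c_utau \<equiv> ocoord 3"
abbreviation "c_th \<equiv> ocoord 4"
abbreviation "c_ph \<equiv> ocoord 5"

definition Dx :: vf where
  "Dx = vfl [(sconst 1, 0), (c_ux, 2),
     (sadd (sscale (1/3) (smult c_lam (smult c_lam c_lam)))
           (sscale 2 (smult (smult c_th c_ph) c_lam)), 3),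
     (sadd (sscale (1/2) (smult c_lam c_lam)) (smult c_th c_ph), 4),
     (smult c_lam c_ph, 8),
     (sscale (-1) (smult c_lam c_th), 9)]"

definition Dy :: vf where
  "Dy = vfl [(sconst 1, 1), (c_uy, 2),
     (sadd (sscale (1/2) (smult c_lam c_lam)) (smult c_th c_ph), 3),
     (c_lam, 4), (c_ph, 8), (sscale (-1) c_th, 9)]"

definition Dnu :: vf where
  "Dnu = vfl [(sconst 1, 6), (c_unu, 2), (smult c_lam c_ph, 3), (c_ph, 4),
     (sscale (-1) c_lam, 9)]"

definition Dtau :: vf where
  "Dtau = vfl [(sconst 1, 7), (c_utau, 2), (sscale (-1) (smult c_lam c_th), 3),
     (sscale (-1) c_th, 4), (c_lam, 8)]"

definition Hgens :: "vf list" where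
  "Hgens = [Dx, Dy, vfl [(sconst 1, 5)], Dnu, Dtau, vfl [(sconst 1, 10)], vfl [(sconst 1, 11)]]"

definition GammaH :: "vf set" where
  "GammaH = {X. \<exists>f. (\<forall>i<7. f i \<in> SF) \<and>
       X = (\<lambda>k S x. \<Sum>i<7. smult (f i) ((Hgens ! i) k) S x)}"

definition ChH :: "vf set" where
  "ChH = {X \<in> GammaH. \<forall>Y \<in> GammaH. sbr X Y \<in> GammaH}"

definition Cfield :: vf where
  "Cfield = (\<lambda>k S x. Dx k S x - smult c_lam (Dy k) S x - smult c_th (Dnu k) S x
                     - smult c_ph (Dtau k) S x)"

end

theory Submission
  imports Defs
begin

text \<open>The generators \<open>H\<^sub>i\<close> of \<open>H\<close> are in normal form with respect to \<open>x, y, \<lambda>, \<nu>, \<tau>, \<theta>, \<phi>\<close>, so a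
  section of \<open>H\<close> is determined by its components along these coordinates. The field \<open>C\<close> lies in \<open>H\<close>
  and each bracket \<open>[C, H\<^sub>i]\<close> lies in \<open>H\<close>; by the graded Leibniz rule so does \<open>[f C, g H\<^sub>i]\<close>, hence
  every multiple of \<open>C\<close> is characteristic. Conversely, if \<open>X = \<Sum> f\<^sub>i H\<^sub>i\<close> is characteristic then
  \<open>[X, D\<^sub>y]\<close> and \<open>[X, \<partial>\<^sub>\<lambda>]\<close> lie in \<open>H\<close>. Modulo \<open>H\<close> they are \<open>\<Sum> f\<^sub>i [H\<^sub>i, D\<^sub>y]\<close> and
  \<open>\<Sum> f\<^sub>i [H\<^sub>i, \<partial>\<^sub>\<lambda>]\<close>, and their components along \<open>u\<^sub>y, u\<^sub>\<nu>, u\<^sub>\<tau>\<close> force the coefficients of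
  \<open>\<partial>\<^sub>\<lambda>, \<partial>\<^sub>\<theta>, \<partial>\<^sub>\<phi>\<close> to vanish and those of \<open>D\<^sub>y, D\<^sub>\<nu>, D\<^sub>\<tau>\<close> to be \<open>-\<lambda>, -\<theta>, -\<phi>\<close> times that of
  \<open>D\<^sub>x\<close>; that is, \<open>X\<close> is a multiple of \<open>C\<close>.\<close>

section \<open>Signs\<close>

definition inversions :: "nat set \<Rightarrow> nat set \<Rightarrow> (nat \<times> nat) set" where
  "inversions A B = {(a, b). a \<in> A \<and> b \<in> B \<and> b < a}"

lemma sgn2_inversions: "sgn2 A B = (-1) ^ card (inversions A B)"
  by (simp add: sgn2_def inversions_def)

lemma finite_inversions: "finite A \<Longrightarrow> finite B \<Longrightarrow> finite (inversions A B)"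
  by (rule finite_subset[of _ "A \<times> B"]) (auto simp: inversions_def)

lemma sgn2_empty_left [simp]: "sgn2 {} B = 1"
  and sgn2_empty_right [simp]: "sgn2 A {} = 1"
  by (simp_all add: sgn2_def)

lemma sgn2_Un_right:
  assumes "finite A" "finite B" "finite C" "B \<inter> C = {}"
  shows "sgn2 A (B \<union> C) = sgn2 A B * sgn2 A C"
proof -
  have "inversions A (B \<union> C) = inversions A B \<union> inversions A C"
    and "inversions A B \<inter> inversions A C = {}"
    using assms(4) by (auto simp: inversions_def)
  then show ?thesis
    using assms by (simp add: sgn2_inversions card_Un_disjoint finite_inversions power_add)
qed

lemma sgn2_Un_left:
  assumes "finite A" "finite B" "finite C" "A \<inter> B = {}"
  shows "sgn2 (A \<union> B) C = sgn2 A C * sgn2 B C"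
proof -
  have "inversions (A \<union> B) C = inversions A C \<union> inversions B C"
    and "inversions A C \<inter> inversions B C = {}"
    using assms(4) by (auto simp: inversions_def)
  then show ?thesis
    using assms by (simp add: sgn2_inversions card_Un_disjoint finite_inversions power_add)
qed

lemma sgn2_square: "sgn2 A B * sgn2 A B = 1"
  by (simp add: sgn2_def flip: power_add)

lemma sgn2_swap:
  assumes "finite A" "finite B" "A \<inter> B = {}"
  shows "sgn2 A B * sgn2 B A = (-1) ^ (card A * card B)"
proof -
  let ?Q = "{(a, b). a \<in> A \<and> b \<in> B \<and> a < b}"
  have "card (inversions B A) = card ?Q"
    by (rule bij_betw_same_card[of "\<lambda>(x, y). (y, x)"])
       (auto simp: bij_betw_def inj_on_def inversions_def image_def)
  moreover have "inversions A B \<union> ?Q = A \<times> B" "inversions A B \<inter> ?Q = {}"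
    using assms(3) by (auto simp: inversions_def)
  moreover have "finite ?Q"
    by (rule finite_subset[of _ "A \<times> B"]) (use assms in auto)
  ultimately have "card (inversions A B) + card (inversions B A) = card A * card B"
    using card_Un_disjoint[OF finite_inversions[OF assms(1,2)], of ?Q]
    by (simp add: card_cartesian_product)
  then show ?thesis
    unfolding sgn2_inversions by (metis power_add)
qed

definition sgn_below :: "nat \<Rightarrow> nat set \<Rightarrow> complex" where
  "sgn_below j S = (-1) ^ card {s \<in> S. s < j}"

lemma sgn_below_empty [simp]: "sgn_below j {} = 1"
  by (simp add: sgn_below_def)

lemma sgn_below_square: "sgn_below j S * sgn_below j S = 1"
  by (simp add: sgn_below_def flip: power_add)

lemma sgn_below_Un:
  assumes "finite A" "finite B" "A \<inter> B = {}"
  shows "sgn_below j (A \<union> B) = sgn_below j A * sgn_below j B"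
proof -
  have "{s \<in> A \<union> B. s < j} = {s \<in> A. s < j} \<union> {s \<in> B. s < j}" by auto
  moreover have "card ({s \<in> A. s < j} \<union> {s \<in> B. s < j}) = card {s \<in> A. s < j} + card {s \<in> B. s < j}"
    using assms by (intro card_Un_disjoint) auto
  ultimately show ?thesis by (simp add: sgn_below_def power_add)
qed

lemma sgn_below_insert_self: "sgn_below j (insert j S) = sgn_below j S"
proof -
  have "{s \<in> insert j S. s < j} = {s \<in> S. s < j}" by auto
  then show ?thesis by (simp add: sgn_below_def)
qed

lemma sgn_below_insert:
  assumes "finite B"
  shows "sgn_below a (insert b B) = (if b < a \<and> b \<notin> B then -1 else 1) * sgn_below a B"
proof (cases "b \<in> B")
  case True
  then show ?thesis by (simp add: insert_absorb)
next
  case False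
  have "{s \<in> insert b B. s < a} = (if b < a then insert b {s \<in> B. s < a} else {s \<in> B. s < a})"
    by auto
  then show ?thesis using False assms by (simp add: sgn_below_def)
qed

lemma sgn2_insert_left:
  assumes "finite A" "finite B" "j \<notin> A"
  shows "sgn2 (insert j A) B = sgn2 A B * sgn_below j B"
proof -
  have "card (inversions {j} B) = card {b \<in> B. b < j}"
    by (rule bij_betw_same_card[of snd]) (auto simp: bij_betw_def inj_on_def inversions_def image_def)
  then have "sgn2 {j} B = sgn_below j B"
    by (simp add: sgn2_inversions sgn_below_def)
  moreover have "insert j A = A \<union> {j}" by auto
  ultimately show ?thesis
    using sgn2_Un_left[of A "{j}" B] assms by simp
qed

lemma sgn2_insert_right:
  assumes "finite A" "finite B" "j \<notin> B"
  shows "sgn2 A (insert j B) = sgn2 A B * sgn2 A {j}"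
proof -
  have "insert j B = B \<union> {j}" by auto
  then show ?thesis using sgn2_Un_right[of A B "{j}"] assms by simp
qed

lemma sgn_below_sgn2_singleton:
  assumes "finite A" "j \<notin> A"
  shows "sgn_below j A * sgn2 A {j} = (-1) ^ card A"
proof -
  have "card (inversions A {j}) = card {a \<in> A. j < a}"
    by (rule bij_betw_same_card[of fst]) (auto simp: bij_betw_def inj_on_def inversions_def image_def)
  moreover have "{a \<in> A. a < j} \<union> {a \<in> A. j < a} = A"
    using assms(2) by (auto, metis linorder_neqE_nat)
  moreover have "card ({a \<in> A. a < j} \<union> {a \<in> A. j < a}) = card {a \<in> A. a < j} + card {a \<in> A. j < a}"
    using assms by (intro card_Un_disjoint) auto
  ultimately show ?thesis
    by (simp add: sgn_below_def sgn2_inversions power_add)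
qed

lemma sgn_below_split:
  assumes "finite S" "A \<subseteq> S"
  shows "sgn_below j S = sgn_below j A * sgn_below j (S - A)"
  using sgn_below_Un[of A "S - A" j] assms by (simp add: Un_absorb1 finite_subset)

lemma sgn2_insert_right_sgn_below:
  assumes "finite A" "finite B" "j \<notin> A" "j \<notin> B"
  shows "sgn2 A (insert j B) * sgn_below j A = (-1) ^ card A * sgn2 A B"
  using sgn2_insert_right[OF assms(1,2,4)] sgn_below_sgn2_singleton[OF assms(1,3)]
  by (simp add: mult_ac)

lemma sgn2_insert_left_sgn_below:
  assumes "finite A" "finite B" "j \<notin> A"
  shows "sgn2 (insert j A) B * sgn_below j B = sgn2 A B"
  using sgn2_insert_left[OF assms] sgn_below_square[of j B] by (simp add: mult.assoc)

lemma sgn_below_sgn2_insert_right: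
  assumes "finite S" "A \<subseteq> S" "j \<notin> S"
  shows "sgn_below j S * sgn2 A (insert j (S - A)) = (-1) ^ card A * sgn_below j (S - A) * sgn2 A (S - A)"
proof -
  have "finite A" "finite (S - A)" "j \<notin> A" "j \<notin> S - A"
    using assms by (auto intro: finite_subset)
  then show ?thesis
    using sgn_below_split[OF assms(1,2)] sgn2_insert_right_sgn_below[of A "S - A" j] by (simp add: mult_ac)
qed

lemma sgn_below_sgn2_insert_left:
  assumes "finite S" "A \<subseteq> S" "j \<notin> S"
  shows "sgn_below j S * sgn2 (insert j A) (S - A) = sgn_below j A * sgn2 A (S - A)"
proof -
  have "finite A" "finite (S - A)" "j \<notin> A"
    using assms by (auto intro: finite_subset)
  then show ?thesis
    using sgn_below_split[OF assms(1,2)] sgn2_insert_left_sgn_below[of A "S - A" j] by (simp add: mult_ac)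
qed

lemma minus_one_power_parity_cong: "even m = even n \<Longrightarrow> (-1::complex) ^ m = (-1) ^ n"
  by (simp add: minus_one_power_iff)

section \<open>Holomorphic functions of the even coordinates\<close>

definition sep_differentiable :: "(pt \<Rightarrow> complex) \<Rightarrow> bool" where
  "sep_differentiable f \<longleftrightarrow> (\<forall>i x. (\<lambda>z. f (x(i := z))) field_differentiable at (x i))"

lemma sep_differentiable_at:
  assumes "sep_differentiable f"
  shows "(\<lambda>z. f (x(i := z))) field_differentiable at w"
proof -
  have "(\<lambda>z. f ((x(i := w))(i := z))) field_differentiable at ((x(i := w)) i)"
    using assms unfolding sep_differentiable_def by blast
  then show ?thesis by simp
qed

lemma sep_differentiable_add:
  "sep_differentiable f \<Longrightarrow> sep_differentiable g \<Longrightarrow> sep_differentiable (\<lambda>x. f x + g x)"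
  unfolding sep_differentiable_def by (auto intro!: field_differentiable_add)

lemma sep_differentiable_mult:
  "sep_differentiable f \<Longrightarrow> sep_differentiable g \<Longrightarrow> sep_differentiable (\<lambda>x. f x * g x)"
  unfolding sep_differentiable_def by (auto intro!: field_differentiable_mult)

lemma pd_add:
  "sep_differentiable f \<Longrightarrow> sep_differentiable g \<Longrightarrow> pd i (\<lambda>x. f x + g x) = (\<lambda>x. pd i f x + pd i g x)"
  by (rule ext) (simp add: pd_def sep_differentiable_at)

lemma pd_diff:
  "sep_differentiable f \<Longrightarrow> sep_differentiable g \<Longrightarrow> pd i (\<lambda>x. f x - g x) = (\<lambda>x. pd i f x - pd i g x)"
  by (rule ext) (simp add: pd_def sep_differentiable_at)

lemma pd_mult:
  "sep_differentiable f \<Longrightarrow> sep_differentiable g \<Longrightarrow>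
    pd i (\<lambda>x. f x * g x) = (\<lambda>x. pd i f x * g x + f x * pd i g x)"
  by (rule ext) (simp add: pd_def sep_differentiable_at algebra_simps)

lemma pd_const [simp]: "pd i (\<lambda>x. c) = (\<lambda>x. 0)"
  by (rule ext) (simp add: pd_def)

lemma pd_coord [simp]: "pd i (\<lambda>x. x j) = (\<lambda>x. if i = j then 1 else 0)"
  by (rule ext) (auto simp: pd_def fun_upd_def)

lemma hol_upd_high:
  assumes "hol f" "6 \<le> i"
  shows "f (x(i := z)) = f x"
proof -
  have trunc: "f y = f (\<lambda>k. if k < 6 then y k else 0)" for y
    using assms(1) by (simp add: hol_def)
  have "(\<lambda>k. if k < 6 then (x(i := z)) k else 0) = (\<lambda>k. if k < 6 then x k else 0)"
    using assms(2) by auto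
  then show ?thesis using trunc[of "x(i := z)"] trunc[of x] by simp
qed

lemma pd_high: "hol f \<Longrightarrow> 6 \<le> i \<Longrightarrow> pd i f = (\<lambda>_. 0)"
  by (rule ext) (simp add: pd_def hol_upd_high)

lemma hol_imp_sep_differentiable:
  assumes "hol f"
  shows "sep_differentiable f"
  unfolding sep_differentiable_def
proof (intro allI)
  fix i x
  show "(\<lambda>z. f (x(i := z))) field_differentiable at (x i)"
  proof (cases "i < 6")
    case True
    then show ?thesis using assms unfolding hol_def by (metis iterpd.simps(1))
  next
    case False
    then show ?thesis by (simp add: hol_upd_high[OF assms])
  qed
qed

lemma iterpd_append: "iterpd (is @ [i]) f = iterpd is (pd i f)"
  by (induction "is") auto

lemma hol_const [simp]: "hol (\<lambda>x. c)"
proof -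
  have "iterpd is (\<lambda>x. c) = (\<lambda>x. if is = [] then c else 0)" for "is"
    by (induction "is") auto
  then show ?thesis by (simp add: hol_def)
qed

lemma hol_pd:
  assumes "hol f"
  shows "hol (pd i f)"
proof (cases "i < 6")
  case True
  have trunc: "f y = f (\<lambda>k. if k < 6 then y k else 0)" for y
    using assms by (simp add: hol_def)
  have "(\<lambda>z. f (x(i := z))) = (\<lambda>z. f ((\<lambda>k. if k < 6 then x k else 0)(i := z)))" for x
    using True by (intro ext, subst (1 2) trunc) (rule arg_cong[where f = f], auto)
  then have "pd i f x = pd i f (\<lambda>k. if k < 6 then x k else 0)" for x
    using True by (simp add: pd_def)
  moreover have "(\<lambda>z. iterpd is (pd i f) (x(j := z))) field_differentiable at (x j)" if "j < 6" for "is" j x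
    using assms that unfolding hol_def by (metis iterpd_append)
  ultimately show ?thesis by (simp add: hol_def)
next
  case False
  then show ?thesis by (simp add: pd_high[OF assms])
qed

lemma hol_iterpd: "hol f \<Longrightarrow> hol (iterpd is f)"
  by (induction "is") (auto intro: hol_pd)

lemma hol_intro:
  assumes "\<And>x. f x = f (\<lambda>i. if i < 6 then x i else 0)"
    and "\<And>is. sep_differentiable (iterpd is f)"
  shows "hol f"
  using assms unfolding hol_def sep_differentiable_def by blast

lemma hol_add [simp]:
  assumes "hol f" "hol g"
  shows "hol (\<lambda>x. f x + g x)"
proof (rule hol_intro)
  have "iterpd is (\<lambda>x. f x + g x) = (\<lambda>x. iterpd is f x + iterpd is g x)" for "is"
    by (induction "is") (simp_all add: pd_add hol_imp_sep_differentiable hol_iterpd assms)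
  then show "sep_differentiable (iterpd is (\<lambda>x. f x + g x))" for "is"
    by (simp add: sep_differentiable_add hol_imp_sep_differentiable hol_iterpd assms)
qed (use assms in \<open>simp add: hol_def\<close>)

text \<open>Every iterated derivative of \<open>f * g\<close> is a finite sum of products of holomorphic functions.\<close>

definition sum_of_products :: "((pt \<Rightarrow> complex) \<times> (pt \<Rightarrow> complex)) list \<Rightarrow> pt \<Rightarrow> complex" where
  "sum_of_products L = (\<lambda>x. \<Sum>(a, b)\<leftarrow>L. a x * b x)"

lemma sep_differentiable_sum_of_products:
  "\<forall>(a, b)\<in>set L. hol a \<and> hol b \<Longrightarrow> sep_differentiable (sum_of_products L)"
proof (induction L)
  case Nil
  then show ?case by (simp add: sum_of_products_def sep_differentiable_def)
next
  case (Cons ab L)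
  obtain a b where ab: "ab = (a, b)" by force
  have "sum_of_products (ab # L) = (\<lambda>x. a x * b x + sum_of_products L x)"
    by (simp add: sum_of_products_def ab)
  moreover have "sep_differentiable (\<lambda>x. a x * b x)"
    using Cons.prems ab by (auto intro: sep_differentiable_mult hol_imp_sep_differentiable)
  ultimately show ?case
    using Cons by (auto intro: sep_differentiable_add)
qed

lemma pd_sum_of_products:
  assumes "\<forall>(a, b)\<in>set L. hol a \<and> hol b"
  shows "pd i (sum_of_products L) = sum_of_products (concat (map (\<lambda>(a, b). [(pd i a, b), (a, pd i b)]) L))"
  using assms
proof (induction L)
  case Nil
  then show ?case by (simp add: sum_of_products_def)
next
  case (Cons ab L)
  obtain a b where ab: "ab = (a, b)" by force
  have ha: "sep_differentiable a" "sep_differentiable b"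
    using Cons.prems ab by (auto intro: hol_imp_sep_differentiable)
  have dL: "sep_differentiable (sum_of_products L)"
    using Cons.prems by (intro sep_differentiable_sum_of_products) auto
  have "sum_of_products (ab # L) = (\<lambda>x. a x * b x + sum_of_products L x)"
    by (simp add: sum_of_products_def ab)
  then have "pd i (sum_of_products (ab # L)) = (\<lambda>x. pd i a x * b x + a x * pd i b x + pd i (sum_of_products L) x)"
    using dL ha by (simp add: pd_add pd_mult sep_differentiable_mult)
  then show ?case using Cons by (simp add: ab sum_of_products_def add.assoc)
qed

lemma hol_mult [simp]:
  assumes "hol f" "hol g"
  shows "hol (\<lambda>x. f x * g x)"
proof (rule hol_intro)
  have ex: "\<exists>L. (\<forall>(a, b)\<in>set L. hol a \<and> hol b) \<and> iterpd is (\<lambda>x. f x * g x) = sum_of_products L" for "is"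
  proof (induction "is")
    case Nil
    show ?case by (rule exI[of _ "[(f, g)]"]) (simp add: assms sum_of_products_def)
  next
    case (Cons i "is")
    then obtain L where "\<forall>(a, b)\<in>set L. hol a \<and> hol b" "iterpd is (\<lambda>x. f x * g x) = sum_of_products L"
      by blast
    then show ?case
      by (intro exI[of _ "concat (map (\<lambda>(a, b). [(pd i a, b), (a, pd i b)]) L)"])
         (auto simp: pd_sum_of_products hol_pd)
  qed
  show "sep_differentiable (iterpd is (\<lambda>x. f x * g x))" for "is"
  proof -
    obtain L where "\<forall>(a, b)\<in>set L. hol a \<and> hol b" "iterpd is (\<lambda>x. f x * g x) = sum_of_products L"
      using ex by blast
    then show ?thesis by (simp add: sep_differentiable_sum_of_products)
  qed
qed (use assms in \<open>simp add: hol_def\<close>)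

lemma hol_coord [simp]:
  assumes "j < 6"
  shows "hol (\<lambda>x. x j)"
proof -
  have "iterpd is (\<lambda>x. x j) = (if is = [] then (\<lambda>x. x j) else if is = [j] then (\<lambda>x. 1) else (\<lambda>x. 0))" for "is"
    by (induction "is") auto
  moreover have "(\<lambda>z. (x(i := z)) j) field_differentiable at w" for x i w
    by (cases "i = j") auto
  ultimately show ?thesis using assms by (auto simp: hol_def)
qed

lemma hol_cmult [simp]: "hol f \<Longrightarrow> hol (\<lambda>x. c * f x)"
  using hol_mult[OF hol_const] by blast

lemma hol_uminus [simp]: "hol f \<Longrightarrow> hol (\<lambda>x. - f x)"
  using hol_cmult[of f "-1"] by simp

lemma hol_divide [simp]: "hol f \<Longrightarrow> hol (\<lambda>x. f x / c)"
  using hol_cmult[of f "1 / c"] by simp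

lemma hol_diff [simp]: "hol f \<Longrightarrow> hol g \<Longrightarrow> hol (\<lambda>x. f x - g x)"
  using hol_add[of f "\<lambda>x. - g x"] by simp

lemma hol_sum: "(\<And>a. a \<in> A \<Longrightarrow> hol (h a)) \<Longrightarrow> hol (\<lambda>x. \<Sum>a\<in>A. h a x)"
proof (induction A rule: infinite_finite_induct)
  case (insert a A)
  then show ?case by simp
qed simp_all

lemma pd_add_hol [simp]: "hol f \<Longrightarrow> hol g \<Longrightarrow> pd i (\<lambda>x. f x + g x) = (\<lambda>x. pd i f x + pd i g x)"
  by (simp add: pd_add hol_imp_sep_differentiable)

lemma pd_diff_hol [simp]: "hol f \<Longrightarrow> hol g \<Longrightarrow> pd i (\<lambda>x. f x - g x) = (\<lambda>x. pd i f x - pd i g x)"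
  by (simp add: pd_diff hol_imp_sep_differentiable)

lemma pd_mult_hol [simp]:
  "hol f \<Longrightarrow> hol g \<Longrightarrow> pd i (\<lambda>x. f x * g x) = (\<lambda>x. pd i f x * g x + f x * pd i g x)"
  by (simp add: pd_mult hol_imp_sep_differentiable)

lemma pd_cmult_hol [simp]: "hol f \<Longrightarrow> pd i (\<lambda>x. c * f x) = (\<lambda>x. c * pd i f x)"
  using pd_mult_hol[OF hol_const, of f i c] by simp

lemma pd_divide_hol [simp]: "hol f \<Longrightarrow> pd i (\<lambda>x. f x / c) = (\<lambda>x. pd i f x / c)"
  using pd_cmult_hol[of f i "1 / c"] by simp

lemma pd_uminus_hol [simp]: "hol f \<Longrightarrow> pd i (\<lambda>x. - f x) = (\<lambda>x. - pd i f x)"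
  using pd_cmult_hol[of f i "-1"] by simp

lemma pd_sum_hol:
  "finite A \<Longrightarrow> (\<And>a. a \<in> A \<Longrightarrow> hol (h a)) \<Longrightarrow> pd i (\<lambda>x. \<Sum>a\<in>A. h a x) = (\<lambda>x. \<Sum>a\<in>A. pd i (h a) x)"
  by (induction A rule: finite_induct) (simp_all add: hol_sum)

section \<open>The superalgebra of superfunctions\<close>

definition supported :: "sfun \<Rightarrow> bool" where
  "supported F \<longleftrightarrow> (\<forall>S. \<not> S \<subseteq> {..<6} \<longrightarrow> F S = (\<lambda>_. 0))"

definition homog :: "nat \<Rightarrow> sfun \<Rightarrow> bool" where
  "homog p F \<longleftrightarrow> (\<forall>S. odd (card S + p) \<longrightarrow> F S = (\<lambda>_. 0))"

lemma SF_iff: "F \<in> SF \<longleftrightarrow> supported F \<and> (\<forall>S. hol (F S))"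
  by (simp add: SF_def supported_def)

lemma SF_supported: "F \<in> SF \<Longrightarrow> supported F"
  by (simp add: SF_iff)

lemma supported_infinite: "supported F \<Longrightarrow> infinite S \<Longrightarrow> F S x = 0"
  unfolding supported_def by (metis finite_lessThan finite_subset)

lemma supported_outside: "supported F \<Longrightarrow> \<not> S \<subseteq> {..<6} \<Longrightarrow> F S x = 0"
  unfolding supported_def by metis

lemma homog_vanish: "homog p F \<Longrightarrow> odd (card S + p) \<Longrightarrow> F S x = 0"
  unfolding homog_def by metis

lemma homog_parity_cong: "even m = even n \<Longrightarrow> homog m F = homog n F"
  unfolding homog_def by simp

lemma smult_infinite: "infinite S \<Longrightarrow> smult F G S x = 0"
  by (simp add: smult_def)

lemma sum_Pow_Pow_Diff:
  assumes "finite S"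
  shows "(\<Sum>D\<in>Pow S. \<Sum>A\<in>Pow D. g A (D - A)) = (\<Sum>A\<in>Pow S. \<Sum>B\<in>Pow (S - A). g A B)"
proof -
  have "(\<Sum>D\<in>Pow S. \<Sum>A\<in>Pow D. g A (D - A)) = (\<Sum>(D, A)\<in>Sigma (Pow S) Pow. g A (D - A))"
    using assms by (subst sum.Sigma) (auto intro: finite_subset)
  also have "\<dots> = (\<Sum>(A, B)\<in>Sigma (Pow S) (\<lambda>A. Pow (S - A)). g A B)"
    by (rule sum.reindex_bij_witness[where i = "\<lambda>(A, B). (A \<union> B, A)" and j = "\<lambda>(D, A). (A, D - A)"])
       auto
  also have "\<dots> = (\<Sum>A\<in>Pow S. \<Sum>B\<in>Pow (S - A). g A B)"
    using assms by (subst sum.Sigma) auto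
  finally show ?thesis .
qed

lemma smult_assoc: "smult (smult F G) H = smult F (smult G H)"
proof (intro ext)
  fix S x
  show "smult (smult F G) H S x = smult F (smult G H) S x"
  proof (cases "finite S")
    case False
    then show ?thesis by (simp add: smult_infinite)
  next
    case fin: True
    let ?g = "\<lambda>A B. sgn2 A B * sgn2 A (S - A - B) * sgn2 B (S - A - B) * F A x * G B x * H (S - A - B) x"
    have "smult (smult F G) H S x =
       (\<Sum>D\<in>Pow S. \<Sum>A\<in>Pow D. sgn2 D (S - D) * (sgn2 A (D - A) * F A x * G (D - A) x) * H (S - D) x)"
      by (simp add: smult_def sum_distrib_left sum_distrib_right)
    also have "\<dots> = (\<Sum>D\<in>Pow S. \<Sum>A\<in>Pow D. ?g A (D - A))"
    proof (intro sum.cong refl)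
      fix D A
      assume D: "D \<in> Pow S" and A: "A \<in> Pow D"
      have "finite A" "finite (D - A)" "finite (S - D)"
        using D A fin by (auto intro: finite_subset)
      then have "sgn2 D (S - D) = sgn2 A (S - D) * sgn2 (D - A) (S - D)"
        using sgn2_Un_left[of A "D - A" "S - D"] A by (simp add: Un_absorb1 Un_Diff_cancel)
      moreover have "S - A - (D - A) = S - D" using A D by auto
      ultimately show "sgn2 D (S - D) * (sgn2 A (D - A) * F A x * G (D - A) x) * H (S - D) x = ?g A (D - A)"
        by (simp add: algebra_simps)
    qed
    also have "\<dots> = (\<Sum>A\<in>Pow S. \<Sum>B\<in>Pow (S - A). ?g A B)"
      by (rule sum_Pow_Pow_Diff[OF fin])
    also have "\<dots> = smult F (smult G H) S x"
      unfolding smult_def sum_distrib_left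
    proof (intro sum.cong refl)
      fix A B
      assume A: "A \<in> Pow S" and B: "B \<in> Pow (S - A)"
      have "finite A" "finite B" "finite (S - A - B)" "S - A = B \<union> (S - A - B)"
        using fin A B by (auto intro: finite_subset)
      then have "sgn2 A (S - A) = sgn2 A B * sgn2 A (S - A - B)"
        using sgn2_Un_right[of A B "S - A - B"] by auto
      then show "?g A B = sgn2 A (S - A) * F A x * (sgn2 B (S - A - B) * G B x * H (S - A - B) x)"
        by (simp add: algebra_simps)
    qed
    finally show ?thesis .
  qed
qed

lemma smult_add_left: "smult (\<lambda>S x. F S x + G S x) H = (\<lambda>S x. smult F H S x + smult G H S x)"
  and smult_add_right: "smult H (\<lambda>S x. F S x + G S x) = (\<lambda>S x. smult H F S x + smult H G S x)"
  and smult_diff_right: "smult H (\<lambda>S x. F S x - G S x) = (\<lambda>S x. smult H F S x - smult H G S x)"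
  and smult_cmult_left: "smult (\<lambda>S x. c * F S x) H = (\<lambda>S x. c * smult F H S x)"
  and smult_cmult_right: "smult H (\<lambda>S x. c * F S x) = (\<lambda>S x. c * smult H F S x)"
  by (simp_all add: smult_def algebra_simps sum.distrib sum_subtractf sum_distrib_left)

lemma smult_zero_left [simp]: "smult (\<lambda>S x. 0) H = (\<lambda>S x. 0)"
  and smult_zero_right [simp]: "smult H (\<lambda>S x. 0) = (\<lambda>S x. 0)"
  by (simp_all add: smult_def)

lemma smult_sum_left: "smult (\<lambda>S x. \<Sum>i\<in>I. F i S x) H = (\<lambda>S x. \<Sum>i\<in>I. smult (F i) H S x)"
  and smult_sum_right: "smult H (\<lambda>S x. \<Sum>i\<in>I. F i S x) = (\<lambda>S x. \<Sum>i\<in>I. smult H (F i) S x)"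
  unfolding smult_def
  by (intro ext, simp add: sum_distrib_left sum_distrib_right algebra_simps, rule sum.swap)+

lemma smult_sconst_left:
  assumes "supported F"
  shows "smult (sconst c) F = (\<lambda>S x. c * F S x)"
proof (intro ext)
  fix S x
  show "smult (sconst c) F S x = c * F S x"
  proof (cases "finite S")
    case False
    then show ?thesis using assms by (simp add: smult_infinite supported_infinite)
  next
    case True
    have "smult (sconst c) F S x = (\<Sum>A\<in>Pow S. if A = {} then c * F S x else 0)"
      unfolding smult_def by (auto simp: sconst_def intro!: sum.cong)
    then show ?thesis using True by simp
  qed
qed

lemma smult_sconst_right:
  assumes "supported F"
  shows "smult F (sconst c) = (\<lambda>S x. c * F S x)"
proof (intro ext)
  fix S x
  show "smult F (sconst c) S x = c * F S x"
  proof (cases "finite S")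
    case False
    then show ?thesis using assms by (simp add: smult_infinite supported_infinite)
  next
    case True
    have "smult F (sconst c) S x = (\<Sum>A\<in>Pow S. if A = S then c * F S x else 0)"
      unfolding smult_def by (auto simp: sconst_def intro!: sum.cong)
    then show ?thesis using True by simp
  qed
qed

lemma smult_commute:
  assumes "homog p F" "homog q G"
  shows "smult G F = (\<lambda>S x. (-1) ^ (p * q) * smult F G S x)"
proof (intro ext)
  fix S x
  show "smult G F S x = (-1) ^ (p * q) * smult F G S x"
  proof (cases "finite S")
    case False
    then show ?thesis by (simp add: smult_infinite)
  next
    case fin: True
    have "smult G F S x = (\<Sum>A\<in>Pow S. sgn2 (S - A) A * G (S - A) x * F A x)"
      unfolding smult_def
      by (rule sum.reindex_bij_witness[where i = "\<lambda>A. S - A" and j = "\<lambda>A. S - A"]) (auto simp: double_diff)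
    also have "\<dots> = (\<Sum>A\<in>Pow S. (-1) ^ (p * q) * (sgn2 A (S - A) * F A x * G (S - A) x))"
    proof (intro sum.cong refl)
      fix A
      assume A: "A \<in> Pow S"
      show "sgn2 (S - A) A * G (S - A) x * F A x = (-1) ^ (p * q) * (sgn2 A (S - A) * F A x * G (S - A) x)"
      proof (cases "odd (card A + p) \<or> odd (card (S - A) + q)")
        case True
        then show ?thesis using assms by (auto simp: homog_vanish)
      next
        case False
        have "finite A" "finite (S - A)" using A fin by (auto intro: finite_subset)
        then have "sgn2 A (S - A) * sgn2 (S - A) A = (-1) ^ (card A * card (S - A))"
          using sgn2_swap by auto
        then have "sgn2 (S - A) A = (-1) ^ (card A * card (S - A)) * sgn2 A (S - A)"
          using sgn2_square[of A "S - A"] by (metis mult.assoc mult.commute mult_1_right)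
        moreover have "(-1::complex) ^ (card A * card (S - A)) = (-1) ^ (p * q)"
          using False by (simp add: minus_one_power_iff)
        ultimately show ?thesis by simp
      qed
    qed
    finally show ?thesis by (simp add: smult_def sum_distrib_left)
  qed
qed

lemma homog_smult:
  assumes "homog p F" "homog q G"
  shows "homog (p + q) (smult F G)"
  unfolding homog_def
proof (intro allI impI ext)
  fix S :: "nat set" and x
  assume odd: "odd (card S + (p + q))"
  show "smult F G S x = 0"
  proof (cases "finite S")
    case False
    then show ?thesis by (simp add: smult_infinite)
  next
    case True
    have "sgn2 A (S - A) * F A x * G (S - A) x = 0" if "A \<in> Pow S" for A
    proof -
      have "card S = card A + card (S - A)"
        using True that by (simp add: card_Diff_subset card_mono finite_subset)
      then have "odd (card A + p) \<or> odd (card (S - A) + q)" using odd by auto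
      then show ?thesis using assms by (auto simp: homog_vanish)
    qed
    then show ?thesis unfolding smult_def by (intro sum.neutral) blast
  qed
qed

lemma supported_smult:
  assumes "supported F" "supported G"
  shows "supported (smult F G)"
  unfolding supported_def
proof (intro allI impI ext)
  fix S :: "nat set" and x
  assume S: "\<not> S \<subseteq> {..<6}"
  have "\<not> A \<subseteq> {..<6} \<or> \<not> S - A \<subseteq> {..<6}" for A
    using S by auto
  then have "F A x = 0 \<or> G (S - A) x = 0" for A
    using assms supported_outside by metis
  then show "smult F G S x = 0" unfolding smult_def by (intro sum.neutral) auto
qed

lemma SF_smult:
  assumes "F \<in> SF" "G \<in> SF"
  shows "smult F G \<in> SF"
proof -
  have "hol (smult F G S)" for S
    using assms unfolding smult_def SF_iff by (intro hol_sum) simp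
  then show ?thesis using assms by (simp add: SF_iff supported_smult)
qed

lemma SF_zero [simp]: "(\<lambda>S x. 0) \<in> SF"
  and SF_sconst [simp]: "sconst c \<in> SF"
  by (auto simp: SF_iff supported_def sconst_def)

lemma SF_add: "F \<in> SF \<Longrightarrow> G \<in> SF \<Longrightarrow> (\<lambda>S x. F S x + G S x) \<in> SF"
  and SF_diff: "F \<in> SF \<Longrightarrow> G \<in> SF \<Longrightarrow> (\<lambda>S x. F S x - G S x) \<in> SF"
  and SF_cmult: "F \<in> SF \<Longrightarrow> (\<lambda>S x. c * F S x) \<in> SF"
  by (auto simp: SF_iff supported_def)

lemma SF_sum: "(\<And>i. i \<in> I \<Longrightarrow> F i \<in> SF) \<Longrightarrow> (\<lambda>S x. \<Sum>i\<in>I. F i S x) \<in> SF"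
  by (auto simp: SF_iff supported_def intro!: hol_sum)

lemma homog_zero [simp]: "homog p (\<lambda>S x. 0)"
  by (simp add: homog_def)

lemma homog_add: "homog p F \<Longrightarrow> homog p G \<Longrightarrow> homog p (\<lambda>S x. F S x + G S x)"
  by (auto simp: homog_def fun_eq_iff)

lemma SF_sproj: "F \<in> SF \<Longrightarrow> sproj p F \<in> SF"
  by (auto simp: SF_iff supported_def sproj_def)

lemma homog_sproj: "p < 2 \<Longrightarrow> homog p (sproj p F)"
  by (auto simp: homog_def sproj_def less_2_cases_iff)

lemma sproj_sum: "sproj p (\<lambda>S x. \<Sum>i\<in>I. F i S x) = (\<lambda>S x. \<Sum>i\<in>I. sproj p (F i) S x)"
  by (auto simp: sproj_def fun_eq_iff)

lemma sproj_homog: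
  assumes "homog p F" "p < 2" "q < 2"
  shows "sproj q F = (if q = p then F else (\<lambda>S x. 0))"
  using assms by (auto simp: homog_def sproj_def less_2_cases_iff fun_eq_iff)

lemma smult_sproj_sum: "(\<Sum>t<2. smult (sproj t g) H S x) = smult g H S x"
proof -
  have "g = (\<lambda>S x. sproj 0 g S x + sproj 1 g S x)"
    by (auto simp: sproj_def)
  then have "smult g H = smult (\<lambda>S x. sproj 0 g S x + sproj 1 g S x) H"
    by simp
  then show ?thesis by (simp add: numeral_2_eq_2 smult_add_left)
qed

section \<open>Coordinate derivations\<close>

lemma odd_d_sgn_below:
  "odd_d j F S x = (if j \<notin> S \<and> j < 6 then sgn_below j S * F (insert j S) x else 0)"
  by (simp add: odd_d_def sgn_below_def)

lemma sum_Pow_insert: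
  assumes "finite S" "j \<notin> S"
  shows "(\<Sum>A\<in>Pow (insert j S). g A) = (\<Sum>A\<in>Pow S. g A) + (\<Sum>A\<in>Pow S. g (insert j A))"
proof -
  have "Pow (insert j S) = Pow S \<union> insert j ` Pow S" by (rule Pow_insert)
  moreover have "Pow S \<inter> insert j ` Pow S = {}" using assms(2) by auto
  moreover have "inj_on (insert j) (Pow S)" using assms(2) by (auto simp: inj_on_def)
  ultimately show ?thesis using assms(1) by (simp add: sum.union_disjoint sum.reindex)
qed

lemma odd_d_smult_notin:
  assumes F: "homog p F" and S: "finite S" "j \<notin> S" "j < 6"
  shows "odd_d j (smult F G) S x = smult (odd_d j F) G S x + (-1) ^ p * smult F (odd_d j G) S x"
proof -
  have "odd_d j (smult F G) S x = sgn_below j S * smult F G (insert j S) x"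
    using S by (simp add: odd_d_sgn_below)
  also have "\<dots> = sgn_below j S * ((\<Sum>A\<in>Pow S. sgn2 A (insert j S - A) * F A x * G (insert j S - A) x)
      + (\<Sum>A\<in>Pow S. sgn2 (insert j A) (insert j S - insert j A) * F (insert j A) x * G (insert j S - insert j A) x))"
    unfolding smult_def by (subst sum_Pow_insert[OF S(1,2)]) simp
  also have "\<dots> = (-1) ^ p * smult F (odd_d j G) S x + smult (odd_d j F) G S x"
    unfolding distrib_left smult_def sum_distrib_left
  proof (intro arg_cong2[where f = "(+)"] sum.cong refl)
    fix A
    assume A: "A \<in> Pow S"
    then have ins: "insert j S - A = insert j (S - A)" "insert j S - insert j A = S - A" "j \<notin> A"
      using S by auto
    show "sgn_below j S * (sgn2 A (insert j S - A) * F A x * G (insert j S - A) x) =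
        (-1) ^ p * (sgn2 A (S - A) * F A x * odd_d j G (S - A) x)"
    proof (cases "odd (card A + p)")
      case True
      then show ?thesis using F by (simp add: homog_vanish)
    next
      case False
      then have "(-1::complex) ^ card A = (-1) ^ p" by (simp add: minus_one_power_iff)
      then show ?thesis
        using sgn_below_sgn2_insert_right[OF S(1) _ S(2), of A] A ins S
        by (simp add: odd_d_sgn_below algebra_simps)
    qed
    show "sgn_below j S * (sgn2 (insert j A) (insert j S - insert j A) * F (insert j A) x
        * G (insert j S - insert j A) x) = sgn2 A (S - A) * odd_d j F A x * G (S - A) x"
      using sgn_below_sgn2_insert_left[OF S(1) _ S(2), of A] A ins S
      by (simp add: odd_d_sgn_below algebra_simps)
  qed
  finally show ?thesis by simp
qed

text \<open>For \<open>j \<in> S\<close> the left side of the Leibniz rule vanishes. On the right, the term removing \<open>\<xi>\<^sub>j\<close>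
  from the factor \<open>\<xi>\<^bsub>insert j A\<^esub>\<close> of \<open>F\<close> cancels the one removing it from the factor \<open>\<xi>\<^bsub>S - A\<^esub>\<close> of \<open>G\<close>,
  since \<open>card (insert j A) + p\<close> is even whenever they are nonzero.\<close>

lemma odd_d_smult_in:
  assumes F: "homog p F" and S: "finite S" "j \<in> S" "j < 6"
  shows "smult (odd_d j F) G S x + (-1) ^ p * smult F (odd_d j G) S x = 0"
proof -
  define S' where "S' = S - {j}"
  have S': "S = insert j S'" "j \<notin> S'" "finite S'" using S by (auto simp: S'_def)
  have "smult (odd_d j F) G S x + (-1) ^ p * smult F (odd_d j G) S x =
      (\<Sum>A\<in>Pow S'. sgn2 A (S - A) * odd_d j F A x * G (S - A) x +
         (-1) ^ p * (sgn2 (insert j A) (S - insert j A) * F (insert j A) x * odd_d j G (S - insert j A) x))"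
  proof -
    have "odd_d j F (insert j A) x = 0" "A \<in> Pow S' \<Longrightarrow> odd_d j G (S - A) x = 0" for A
      using S' by (auto simp: odd_d_sgn_below)
    then show ?thesis
      unfolding smult_def S'(1) sum_Pow_insert[OF S'(3,2)]
      by (simp add: sum.distrib sum_distrib_left)
  qed
  also have "\<dots> = 0"
  proof (intro sum.neutral ballI)
    fix A
    assume A: "A \<in> Pow S'"
    have fin: "finite A" "finite (S' - A)" and jA: "j \<notin> A" "j \<notin> S' - A"
      and diff: "S - A = insert j (S' - A)" "S - insert j A = S' - A"
      using A S' by (auto intro: finite_subset)
    have "sgn2 A (S - A) * odd_d j F A x = (-1) ^ card A * sgn2 A (S' - A) * F (insert j A) x"
      using sgn2_insert_right_sgn_below[OF fin jA] jA S unfolding diff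
      by (simp add: odd_d_sgn_below mult.assoc[symmetric])
    moreover have "sgn2 (insert j A) (S - insert j A) * odd_d j G (S - insert j A) x = sgn2 A (S' - A) * G (S - A) x"
      using sgn2_insert_left_sgn_below[OF fin jA(1)] jA S unfolding diff
      by (simp add: odd_d_sgn_below mult.assoc[symmetric])
    moreover have "F (insert j A) x = 0 \<or> (-1::complex) ^ card A = - ((-1) ^ p)"
      using F fin jA by (auto simp: homog_vanish minus_one_power_iff)
    ultimately show "sgn2 A (S - A) * odd_d j F A x * G (S - A) x +
        (-1) ^ p * (sgn2 (insert j A) (S - insert j A) * F (insert j A) x * odd_d j G (S - insert j A) x) = 0"
      by (auto simp: algebra_simps)
  qed
  finally show ?thesis .
qed

lemma odd_d_smult:
  assumes "homog p F"
  shows "odd_d j (smult F G) = (\<lambda>S x. smult (odd_d j F) G S x + (-1) ^ p * smult F (odd_d j G) S x)"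
proof (intro ext)
  fix S x
  show "odd_d j (smult F G) S x = smult (odd_d j F) G S x + (-1) ^ p * smult F (odd_d j G) S x"
  proof (cases "finite S \<and> j < 6")
    case True
    then show ?thesis
      using odd_d_smult_notin[OF assms] odd_d_smult_in[OF assms]
      by (cases "j \<in> S") (simp_all add: odd_d_sgn_below)
  next
    case False
    then show ?thesis by (auto simp: odd_d_sgn_below smult_infinite smult_def)
  qed
qed

lemma even_d_smult:
  assumes "F \<in> SF" "G \<in> SF"
  shows "even_d i (smult F G) = (\<lambda>S x. smult (even_d i F) G S x + smult F (even_d i G) S x)"
proof (intro ext)
  fix S x
  have hol: "hol (F A)" "hol (G A)" for A using assms by (auto simp: SF_iff)
  show "even_d i (smult F G) S x = smult (even_d i F) G S x + smult F (even_d i G) S x"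
  proof (cases "finite S")
    case False
    then have "smult F G S = (\<lambda>x. 0)" by (simp add: fun_eq_iff smult_infinite)
    then show ?thesis using False by (simp add: even_d_def smult_infinite)
  next
    case True
    have "even_d i (smult F G) S = pd i (\<lambda>x. \<Sum>A\<in>Pow S. sgn2 A (S - A) * F A x * G (S - A) x)"
      by (simp add: even_d_def smult_def)
    also have "\<dots> = (\<lambda>x. \<Sum>A\<in>Pow S. pd i (\<lambda>x. sgn2 A (S - A) * F A x * G (S - A) x) x)"
      using True hol by (intro pd_sum_hol) auto
    finally show ?thesis
      using hol by (simp add: smult_def even_d_def sum.distrib algebra_simps)
  qed
qed

lemma SF_even_d: "F \<in> SF \<Longrightarrow> even_d i F \<in> SF"
  by (auto simp: SF_iff supported_def even_d_def hol_pd)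

lemma SF_odd_d:
  assumes "F \<in> SF"
  shows "odd_d j F \<in> SF"
proof -
  have "odd_d j F S = (\<lambda>_. 0)" if "\<not> S \<subseteq> {..<6}" for S
    using that supported_outside[OF SF_supported[OF assms], of "insert j S"]
    by (auto simp: odd_d_sgn_below)
  moreover have "hol (odd_d j F S)" for S
    using assms unfolding odd_d_sgn_below SF_iff by (cases "j \<notin> S \<and> j < 6") auto
  ultimately show ?thesis by (simp add: SF_iff supported_def)
qed

lemma SF_dcoord: "F \<in> SF \<Longrightarrow> dcoord k F \<in> SF"
  by (simp add: dcoord_def SF_even_d SF_odd_d)

definition coord_parity :: "nat \<Rightarrow> nat" where
  "coord_parity k = (if k < 6 then 0 else 1)"

lemma dcoord_smult:
  assumes "F \<in> SF" "G \<in> SF" "homog p F"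
  shows "dcoord k (smult F G) =
    (\<lambda>S x. smult (dcoord k F) G S x + (-1) ^ (p * coord_parity k) * smult F (dcoord k G) S x)"
  by (simp add: dcoord_def coord_parity_def even_d_smult[OF assms(1,2)] odd_d_smult[OF assms(3)])

lemma dcoord_sum:
  assumes "finite I" "\<And>a. a \<in> I \<Longrightarrow> F a \<in> SF"
  shows "dcoord k (\<lambda>S x. \<Sum>a\<in>I. F a S x) = (\<lambda>S x. \<Sum>a\<in>I. dcoord k (F a) S x)"
  using assms by (simp add: dcoord_def even_d_def odd_d_sgn_below pd_sum_hol SF_iff sum_distrib_left fun_eq_iff)

lemma dcoord_zero [simp]: "dcoord k (\<lambda>S x. 0) = (\<lambda>S x. 0)"
  by (simp add: dcoord_def even_d_def odd_d_def fun_eq_iff)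

section \<open>Vector fields and their supercommutator\<close>

definition hol_vf :: "vf \<Rightarrow> bool" where
  "hol_vf X \<longleftrightarrow> (\<forall>k. X k \<in> SF)"

definition homog_vf :: "nat \<Rightarrow> vf \<Rightarrow> bool" where
  "homog_vf p X \<longleftrightarrow> (\<forall>k. homog (p + coord_parity k) (X k))"

lemma homog_vf_mod2: "homog_vf (p mod 2) X = homog_vf p X"
proof -
  have "homog (p mod 2 + coord_parity k) F = homog (p + coord_parity k) F" for k F
    by (rule homog_parity_cong) (simp add: even_add)
  then show ?thesis by (simp add: homog_vf_def)
qed

lemma vapply_sum:
  assumes "finite I" "\<And>a. a \<in> I \<Longrightarrow> F a \<in> SF"
  shows "vapply X (\<lambda>S x. \<Sum>a\<in>I. F a S x) = (\<lambda>S x. \<Sum>a\<in>I. vapply X (F a) S x)"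
  using assms by (simp add: vapply_def dcoord_sum smult_sum_right) (simp add: fun_eq_iff sum.swap[of _ I])

lemma vapply_field_add: "vapply (\<lambda>k S x. X k S x + Y k S x) g = (\<lambda>S x. vapply X g S x + vapply Y g S x)"
  by (simp add: vapply_def smult_add_left sum.distrib)

lemma vapply_field_sum: "vapply (\<lambda>k S x. \<Sum>a\<in>I. X a k S x) g = (\<lambda>S x. \<Sum>a\<in>I. vapply (X a) g S x)"
  by (simp add: vapply_def smult_sum_left) (simp add: fun_eq_iff sum.swap[of _ I])

lemma vapply_zero [simp]: "vapply X (\<lambda>S x. 0) = (\<lambda>S x. 0)"
  and vapply_field_zero [simp]: "vapply (\<lambda>k S x. 0) g = (\<lambda>S x. 0)"
  by (simp_all add: vapply_def)

lemma vapply_vscale: "vapply (vscale f X) g = smult f (vapply X g)"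
  by (simp add: vapply_def vscale_def smult_assoc smult_sum_right)

lemma SF_vapply: "hol_vf X \<Longrightarrow> g \<in> SF \<Longrightarrow> vapply X g \<in> SF"
  unfolding vapply_def hol_vf_def by (intro SF_sum SF_smult SF_dcoord) auto

lemma vapply_smult:
  assumes X: "homog_vf p X" "hol_vf X" and g: "g \<in> SF" "homog s g" and h: "h \<in> SF"
  shows "vapply X (smult g h) = (\<lambda>S x. smult (vapply X g) h S x + (-1) ^ (p * s) * smult g (vapply X h) S x)"
proof -
  have "smult (X k) (dcoord k (smult g h)) = (\<lambda>S x. smult (smult (X k) (dcoord k g)) h S x
      + (-1) ^ (p * s) * smult g (smult (X k) (dcoord k h)) S x)" for k
  proof -
    have "smult (X k) g = (\<lambda>S x. (-1) ^ (s * (p + coord_parity k)) * smult g (X k) S x)"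
      using smult_commute[OF g(2)] X(1) by (simp add: homog_vf_def)
    then have "smult (X k) (smult g (dcoord k h)) =
        (\<lambda>S x. (-1) ^ (s * (p + coord_parity k)) * smult g (smult (X k) (dcoord k h)) S x)"
      by (simp only: smult_assoc[symmetric] smult_cmult_left)
    moreover have "(-1::complex) ^ (s * coord_parity k) * (-1) ^ (s * (p + coord_parity k)) = (-1) ^ (p * s)"
      by (simp flip: power_add) (rule minus_one_power_parity_cong, auto simp: algebra_simps)
    ultimately show ?thesis
      unfolding dcoord_smult[OF g(1) h g(2)] smult_add_right smult_cmult_right smult_assoc[symmetric]
      by (simp add: mult.assoc[symmetric])
  qed
  then show ?thesis
    by (simp add: vapply_def sum.distrib smult_sum_left smult_sum_right sum_distrib_left)
qed

lemma vpart_homog_vf: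
  assumes "homog_vf a X" "a < 2" "q < 2"
  shows "vpart q X = (if q = a then X else (\<lambda>k S x. 0))"
proof (rule ext)
  fix k
  have "homog ((a + coord_parity k) mod 2) (X k) = homog (a + coord_parity k) (X k)"
    by (rule homog_parity_cong) simp
  then have "homog ((a + coord_parity k) mod 2) (X k)"
    using assms(1) by (simp add: homog_vf_def)
  moreover have "(q + coord_parity k) mod 2 = (a + coord_parity k) mod 2 \<longleftrightarrow> q = a"
    using assms(2,3) by (auto simp: coord_parity_def less_2_cases_iff)
  ultimately show "vpart q X k = (if q = a then X else (\<lambda>k S x. 0)) k"
    using sproj_homog[of "(a + coord_parity k) mod 2" "X k" "(q + coord_parity k) mod 2"]
    by (simp add: vpart_def coord_parity_def)
qed

lemma sbr_eq_hbr:
  assumes "homog_vf a X" "homog_vf b Y" "a < 2" "b < 2"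
  shows "sbr X Y = hbr a b X Y"
proof -
  have hbr_vpart: "hbr p q (vpart p X) (vpart q Y) = (if p = a \<and> q = b then hbr a b X Y else (\<lambda>k S x. 0))"
    if "p < 2" "q < 2" for p q
    using that assms by (simp add: vpart_homog_vf hbr_def)
  from assms(3,4) have "a = 0 \<or> a = 1" "b = 0 \<or> b = 1" by auto
  then show ?thesis
    unfolding sbr_def by (elim disjE) (simp_all add: hbr_vpart numeral_2_eq_2)
qed

lemma hol_vf_vpart: "hol_vf X \<Longrightarrow> hol_vf (vpart p X)"
  by (simp add: hol_vf_def vpart_def SF_sproj)

lemma hol_vf_vscale: "g \<in> SF \<Longrightarrow> hol_vf B \<Longrightarrow> hol_vf (vscale g B)"
  by (simp add: hol_vf_def vscale_def SF_smult)

lemma homog_vf_vscale: "homog_vf b B \<Longrightarrow> homog s g \<Longrightarrow> homog_vf (s + b) (vscale g B)"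
  unfolding homog_vf_def vscale_def using homog_smult by (metis add.assoc)

lemma vpart_sum: "vpart p (\<lambda>k S x. \<Sum>i\<in>I. X i k S x) = (\<lambda>k S x. \<Sum>i\<in>I. vpart p (X i) k S x)"
  by (simp add: vpart_def sproj_sum)

lemma hbr_sum_right:
  assumes "finite I" "\<And>i. i \<in> I \<Longrightarrow> hol_vf (B i)"
  shows "hbr p q A (\<lambda>k S x. \<Sum>i\<in>I. B i k S x) = (\<lambda>k S x. \<Sum>i\<in>I. hbr p q A (B i) k S x)"
  using assms by (simp add: hbr_def vapply_sum hol_vf_def vapply_field_sum sum_subtractf sum_distrib_left)

lemma hbr_sum_left:
  assumes "finite I" "\<And>i. i \<in> I \<Longrightarrow> hol_vf (A i)"
  shows "hbr p q (\<lambda>k S x. \<Sum>i\<in>I. A i k S x) B = (\<lambda>k S x. \<Sum>i\<in>I. hbr p q (A i) B k S x)"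
  using assms by (simp add: hbr_def vapply_sum hol_vf_def vapply_field_sum sum_subtractf sum_distrib_left)

lemma sbr_sum_right:
  assumes "finite I" "\<And>i. i \<in> I \<Longrightarrow> hol_vf (Y i)"
  shows "sbr X (\<lambda>k S x. \<Sum>i\<in>I. Y i k S x) = (\<lambda>k S x. \<Sum>i\<in>I. sbr X (Y i) k S x)"
proof -
  have "hbr p q (vpart p X) (vpart q (\<lambda>k S x. \<Sum>i\<in>I. Y i k S x)) =
      (\<lambda>k S x. \<Sum>i\<in>I. hbr p q (vpart p X) (vpart q (Y i)) k S x)" for p q
    unfolding vpart_sum using assms by (intro hbr_sum_right) (auto intro: hol_vf_vpart)
  then show ?thesis unfolding sbr_def by (simp add: fun_eq_iff sum.swap[of _ I])
qed

lemma sbr_sum_left: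
  assumes "finite I" "\<And>i. i \<in> I \<Longrightarrow> hol_vf (X i)"
  shows "sbr (\<lambda>k S x. \<Sum>i\<in>I. X i k S x) Y = (\<lambda>k S x. \<Sum>i\<in>I. sbr (X i) Y k S x)"
proof -
  have "hbr p q (vpart p (\<lambda>k S x. \<Sum>i\<in>I. X i k S x)) (vpart q Y) =
      (\<lambda>k S x. \<Sum>i\<in>I. hbr p q (vpart p (X i)) (vpart q Y) k S x)" for p q
    unfolding vpart_sum using assms by (intro hbr_sum_left) (auto intro: hol_vf_vpart)
  then show ?thesis unfolding sbr_def by (simp add: fun_eq_iff sum.swap[of _ I])
qed

lemma hbr_vscale_right:
  assumes A: "homog_vf a A" "hol_vf A" and B: "homog_vf b B" "hol_vf B" and g: "g \<in> SF" "homog s g"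
    and c: "even c = even (s + b)"
  shows "hbr a c A (vscale g B) =
    (\<lambda>k S x. smult (vapply A g) (B k) S x + (-1) ^ (a * s) * smult g (hbr a b A B k) S x)"
proof (intro ext)
  fix k S x
  have "(-1::complex) ^ (a * c) = (-1) ^ (a * s) * (-1) ^ (a * b)"
    by (simp flip: power_add) (rule minus_one_power_parity_cong, use c in \<open>auto simp: algebra_simps\<close>)
  moreover have "smult g (hbr a b A B k) = (\<lambda>S x. smult g (vapply A (B k)) S x
      - (-1) ^ (a * b) * smult g (vapply B (A k)) S x)"
    by (simp add: hbr_def smult_diff_right smult_cmult_right)
  ultimately show "hbr a c A (vscale g B) k S x =
      smult (vapply A g) (B k) S x + (-1) ^ (a * s) * smult g (hbr a b A B k) S x"
    using B(2) unfolding hbr_def vscale_def hol_vf_def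
    using vapply_smult[OF A g, of "B k"] vapply_vscale[of g B "A k", unfolded vscale_def]
    by (simp add: algebra_simps)
qed

lemma hbr_vscale_left:
  assumes A: "homog_vf a A" "hol_vf A" and B: "homog_vf b B" "hol_vf B" and f: "f \<in> SF" "homog s f"
    and c: "even c = even (s + a)"
  shows "hbr c b (vscale f A) B =
    (\<lambda>k S x. smult f (hbr a b A B k) S x - (-1) ^ (c * b) * smult (vapply B f) (A k) S x)"
proof (intro ext)
  fix k S x
  have "(-1::complex) ^ (c * b) * (-1) ^ (b * s) = (-1) ^ (a * b)"
    by (simp flip: power_add) (rule minus_one_power_parity_cong, use c in \<open>auto simp: algebra_simps\<close>)
  moreover have "smult f (hbr a b A B k) = (\<lambda>S x. smult f (vapply A (B k)) S x
      - (-1) ^ (a * b) * smult f (vapply B (A k)) S x)"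
    by (simp add: hbr_def smult_diff_right smult_cmult_right)
  ultimately show "hbr c b (vscale f A) B k S x =
      smult f (hbr a b A B k) S x - (-1) ^ (c * b) * smult (vapply B f) (A k) S x"
    using A(2) vapply_smult[OF B f, of "A k"] vapply_vscale[of f A "B k"] unfolding hbr_def hol_vf_def
    by (simp add: vscale_def algebra_simps)
qed

section \<open>Explicit superfunctions and vector fields\<close>

text \<open>A term \<open>(T, m)\<close> stands for \<open>m \<xi>\<^sub>T\<close>. The operations below act on term lists, so that
  products, derivatives and brackets of explicit fields can be evaluated by the simplifier.\<close>

type_synonym terms = "(nat set \<times> (pt \<Rightarrow> complex)) list"

definition sfun_of :: "terms \<Rightarrow> sfun" where
  "sfun_of L = (\<lambda>S x. \<Sum>(T, m)\<leftarrow>L. if S = T then m x else 0)"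

definition smono :: "nat set \<Rightarrow> (pt \<Rightarrow> complex) \<Rightarrow> sfun" where
  "smono T m = (\<lambda>S x. if S = T then m x else 0)"

definition sdiff :: "sfun \<Rightarrow> sfun \<Rightarrow> sfun" where
  "sdiff F G = (\<lambda>S x. F S x - G S x)"

definition scale_terms :: "complex \<Rightarrow> terms \<Rightarrow> terms" where
  "scale_terms c L = map (\<lambda>(T, m). (T, \<lambda>x. c * m x)) L"

definition mult_terms :: "terms \<Rightarrow> terms \<Rightarrow> terms" where
  "mult_terms L1 L2 = concat (map (\<lambda>(T, m). concat (map (\<lambda>(U, n).
      if T \<inter> U = {} then [(T \<union> U, \<lambda>x. sgn2 T U * m x * n x)] else []) L2)) L1)"

definition pd_terms :: "nat \<Rightarrow> terms \<Rightarrow> terms" where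
  "pd_terms i L = map (\<lambda>(T, m). (T, pd i m)) L"

definition odd_d_terms :: "nat \<Rightarrow> terms \<Rightarrow> terms" where
  "odd_d_terms j L = concat (map (\<lambda>(T, m). if j \<in> T then [(T - {j}, \<lambda>x. sgn_below j T * m x)] else []) L)"

definition coeff_terms :: "terms \<Rightarrow> nat set \<Rightarrow> pt \<Rightarrow> complex" where
  "coeff_terms L T x = (\<Sum>(U, m)\<leftarrow>L. if T = U then m x else 0)"

lemma scale_terms_simps [simp]:
  "scale_terms c [] = []"
  "scale_terms c ((T, m) # L) = (T, \<lambda>x. c * m x) # scale_terms c L"
  by (simp_all add: scale_terms_def)

lemma mult_terms_simps [simp]:
  "mult_terms [] L2 = []"
  "mult_terms ((T, m) # L1) L2 = concat (map (\<lambda>(U, n).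
      if T \<inter> U = {} then [(T \<union> U, \<lambda>x. sgn2 T U * m x * n x)] else []) L2) @ mult_terms L1 L2"
  by (simp_all add: mult_terms_def)

lemma pd_terms_simps [simp]:
  "pd_terms i [] = []"
  "pd_terms i ((T, m) # L) = (T, pd i m) # pd_terms i L"
  by (simp_all add: pd_terms_def)

lemma odd_d_terms_simps [simp]:
  "odd_d_terms j [] = []"
  "odd_d_terms j ((T, m) # L) =
    (if j \<in> T then [(T - {j}, \<lambda>x. sgn_below j T * m x)] else []) @ odd_d_terms j L"
  by (simp_all add: odd_d_terms_def)

lemma coeff_terms_simps [simp]:
  "coeff_terms [] T x = 0"
  "coeff_terms ((U, m) # L) T x = (if T = U then m x else 0) + coeff_terms L T x"
  by (simp_all add: coeff_terms_def)

lemma sfun_of_Nil: "sfun_of [] = (\<lambda>S x. 0)"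
  by (simp add: sfun_of_def)

lemma sfun_of_Cons: "sfun_of ((T, m) # L) = (\<lambda>S x. smono T m S x + sfun_of L S x)"
  by (simp add: sfun_of_def smono_def)

lemma sfun_of_append: "sfun_of (L1 @ L2) = (\<lambda>S x. sfun_of L1 S x + sfun_of L2 S x)"
  by (simp add: sfun_of_def)

lemma sconst_eq_sfun_of: "sconst c = sfun_of [({}, \<lambda>x. c)]"
  and ecoord_eq_sfun_of: "ecoord i = sfun_of [({}, \<lambda>x. x i)]"
  and ocoord_eq_sfun_of: "ocoord j = sfun_of [({j}, \<lambda>x. 1)]"
  by (simp_all add: sfun_of_def sconst_def ecoord_def ocoord_def)

lemma sadd_sfun_of: "sadd (sfun_of L1) (sfun_of L2) = sfun_of (L1 @ L2)"
  by (simp add: sfun_of_def sadd_def)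

lemma sscale_sfun_of: "sscale c (sfun_of L) = sfun_of (scale_terms c L)"
  by (induction L) (auto simp: sscale_def sfun_of_def algebra_simps fun_eq_iff)

lemma sdiff_sfun_of: "sdiff (sfun_of L1) (sfun_of L2) = sfun_of (L1 @ scale_terms (-1) L2)"
  using sscale_sfun_of[of "-1" L2] by (simp add: sdiff_def sscale_def sfun_of_append fun_eq_iff)

lemma smult_smono:
  assumes "finite T" "finite U"
  shows "smult (smono T m) (smono U n) =
    (if T \<inter> U = {} then smono (T \<union> U) (\<lambda>x. sgn2 T U * m x * n x) else (\<lambda>S x. 0))"
proof (intro ext)
  fix S x
  show "smult (smono T m) (smono U n) S x =
    (if T \<inter> U = {} then smono (T \<union> U) (\<lambda>x. sgn2 T U * m x * n x) else (\<lambda>S x. 0)) S x"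
  proof (cases "finite S")
    case False
    then have "S \<noteq> T \<union> U" using assms by auto
    then show ?thesis using False by (simp add: smult_infinite smono_def)
  next
    case True
    have "smult (smono T m) (smono U n) S x =
        (\<Sum>A\<in>Pow S. if A = T then (if S - T = U then sgn2 T U * m x * n x else 0) else 0)"
      unfolding smult_def smono_def by (intro sum.cong) auto
    also have "\<dots> = (if T \<subseteq> S \<and> S - T = U then sgn2 T U * m x * n x else 0)"
      using True by (simp add: sum.delta')
    finally show ?thesis by (auto simp: smono_def)
  qed
qed

lemma smult_smono_sfun_of:
  assumes "finite T" "\<forall>(U, n)\<in>set L. finite U"
  shows "smult (smono T m) (sfun_of L) = sfun_of (concat (map (\<lambda>(U, n).
      if T \<inter> U = {} then [(T \<union> U, \<lambda>x. sgn2 T U * m x * n x)] else []) L))"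
  using assms(2)
proof (induction L)
  case Nil
  then show ?case by (simp add: sfun_of_Nil)
next
  case (Cons a L)
  obtain U n where a: "a = (U, n)" by force
  have "finite U" using Cons.prems a by auto
  then have "smult (smono T m) (smono U n) =
      sfun_of (if T \<inter> U = {} then [(T \<union> U, \<lambda>x. sgn2 T U * m x * n x)] else [])"
    by (simp only: smult_smono[OF assms(1)]) (simp add: sfun_of_def smono_def)
  then show ?case using Cons a by (simp add: sfun_of_Cons smult_add_right sfun_of_append)
qed

lemma smult_sfun_of:
  assumes "\<forall>(T, m)\<in>set L1. finite T" "\<forall>(U, n)\<in>set L2. finite U"
  shows "smult (sfun_of L1) (sfun_of L2) = sfun_of (mult_terms L1 L2)"
  using assms(1)
proof (induction L1)
  case Nil
  then show ?case by (simp add: sfun_of_Nil)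
next
  case (Cons a L)
  obtain T m where a: "a = (T, m)" by force
  have "finite T" using Cons.prems a by auto
  then show ?case
    using Cons a smult_smono_sfun_of[OF _ assms(2), of T m]
    by (simp add: sfun_of_Cons smult_add_left sfun_of_append)
qed

lemma hol_smono: "hol m \<Longrightarrow> hol (smono T m S)"
  by (cases "S = T") (simp_all add: smono_def)

lemma hol_sfun_of: "\<forall>(T, m)\<in>set L. hol m \<Longrightarrow> hol (sfun_of L S)"
  by (induction L) (auto simp: sfun_of_Nil sfun_of_Cons hol_smono)

lemma even_d_sfun_of:
  assumes "\<forall>(T, m)\<in>set L. hol m"
  shows "even_d i (sfun_of L) = sfun_of (pd_terms i L)"
  using assms
proof (induction L)
  case Nil
  then show ?case by (simp add: sfun_of_Nil even_d_def)
next
  case (Cons a L)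
  obtain T m where a: "a = (T, m)" by force
  have "hol m" "hol (sfun_of L S)" for S
    using Cons.prems a hol_sfun_of[of L] by auto
  moreover have "pd i (sfun_of L S) = sfun_of (pd_terms i L) S" for S
    using Cons a by (auto simp: even_d_def dest: fun_cong)
  ultimately show ?case
    by (auto simp: even_d_def a sfun_of_Cons smono_def fun_eq_iff)
qed

lemma odd_d_sfun_of:
  assumes "j < 6"
  shows "odd_d j (sfun_of L) = sfun_of (odd_d_terms j L)"
proof (induction L)
  case Nil
  then show ?case by (simp add: sfun_of_Nil odd_d_sgn_below fun_eq_iff)
next
  case (Cons a L)
  obtain T m where a: "a = (T, m)" by force
  have "odd_d j (sfun_of (a # L)) S x = sfun_of (odd_d_terms j (a # L)) S x" for S x
  proof -
    have "odd_d j (sfun_of (a # L)) S x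
        = (if j \<notin> S \<and> insert j S = T then sgn_below j S * m x else 0) + odd_d j (sfun_of L) S x"
      using assms by (simp add: odd_d_sgn_below sfun_of_Cons smono_def a algebra_simps)
    also have "\<dots> = (if j \<in> T \<and> S = T - {j} then sgn_below j T * m x else 0) + sfun_of (odd_d_terms j L) S x"
    proof -
      have "(j \<notin> S \<and> insert j S = T) = (j \<in> T \<and> S = T - {j})" by auto
      moreover have "j \<notin> S \<and> insert j S = T \<Longrightarrow> sgn_below j S = sgn_below j T"
        using sgn_below_insert_self by metis
      ultimately show ?thesis using Cons by auto
    qed
    finally show ?thesis
      by (cases "j \<in> T") (simp_all add: a sfun_of_Cons sfun_of_append sfun_of_Nil smono_def)
  qed
  then show ?case by (simp add: fun_eq_iff)
qed

lemma dcoord_sfun_of: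
  "k < 12 \<Longrightarrow> \<forall>(T, m)\<in>set L. hol m \<Longrightarrow>
    dcoord k (sfun_of L) = (if k < 6 then sfun_of (pd_terms k L) else sfun_of (odd_d_terms (k - 6) L))"
  by (simp add: dcoord_def even_d_sfun_of odd_d_sfun_of)

lemma sfun_of_eqI:
  assumes "\<forall>T\<in>set (map fst L1 @ map fst L2). \<forall>x. coeff_terms L1 T x = coeff_terms L2 T x"
  shows "sfun_of L1 = sfun_of L2"
proof (intro ext)
  fix S x
  have eq: "sfun_of L S x = coeff_terms L S x" for L
    by (simp add: sfun_of_def coeff_terms_def)
  have zero: "S \<notin> set (map fst L) \<Longrightarrow> coeff_terms L S x = 0" for L
  proof (induction L)
    case (Cons a L)
    then show ?case by (cases a) auto
  qed simp
  show "sfun_of L1 S x = sfun_of L2 S x"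
    using assms zero[of L1] zero[of L2] unfolding eq
    by (cases "S \<in> set (map fst L1 @ map fst L2)") auto
qed

lemma SF_smono: "T \<subseteq> {..<6} \<Longrightarrow> hol m \<Longrightarrow> smono T m \<in> SF"
  unfolding SF_iff supported_def by (auto simp: hol_smono) (auto simp: smono_def fun_eq_iff split: if_splits)

lemma SF_sfun_of: "\<forall>(T, m)\<in>set L. T \<subseteq> {..<6} \<and> hol m \<Longrightarrow> sfun_of L \<in> SF"
  by (induction L) (auto simp: sfun_of_Nil sfun_of_Cons SF_smono intro!: SF_add)

lemma homog_smono: "even (card T + p) \<Longrightarrow> homog p (smono T m)"
  by (auto simp: homog_def smono_def fun_eq_iff)

lemma homog_sfun_of: "\<forall>(T, m)\<in>set L. even (card T + p) \<Longrightarrow> homog p (sfun_of L)"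
  by (induction L) (auto simp: sfun_of_Nil sfun_of_Cons homog_smono intro!: homog_add)

lemma vfl_Nil: "vfl [] k = sfun_of []"
  by (simp add: vfl_def sfun_of_def)

lemma vfl_Cons: "vfl ((c, j) # l) k = (if j = k then sadd c (vfl l k) else vfl l k)"
  by (simp add: vfl_def sadd_def)

lemma vfl_other: "\<forall>(c, j)\<in>set l. j \<noteq> k \<Longrightarrow> vfl l k = (\<lambda>S x. 0)"
  unfolding vfl_def by (induction l) auto

lemma vapply_vfl_Nil: "vapply (vfl []) g = sfun_of []"
  by (simp add: vapply_def vfl_def sfun_of_def)

lemma vapply_vfl_Cons:
  assumes "j < 12"
  shows "vapply (vfl ((c, j) # l)) g = sadd (smult c (dcoord j g)) (vapply (vfl l) g)"
proof -
  have "vfl ((c, j) # l) = (\<lambda>k S x. (if j = k then c S x else 0) + vfl l k S x)"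
    by (simp add: vfl_def fun_eq_iff)
  moreover have "smult (\<lambda>S x. if j = k then c S x else 0) (dcoord k g) S x =
      (if j = k then smult c (dcoord j g) S x else 0)" for k S x
    by (cases "j = k") auto
  ultimately show ?thesis
    using assms by (simp add: vapply_field_add vapply_def sadd_def)
qed

lemma vfl_eqI:
  assumes "\<And>k. k < 12 \<Longrightarrow> vfl l1 k = vfl l2 k" "\<forall>(c, j)\<in>set l1. j < 12" "\<forall>(c, j)\<in>set l2. j < 12"
  shows "vfl l1 = vfl l2"
proof (rule ext)
  fix k
  show "vfl l1 k = vfl l2 k"
  proof (cases "k < 12")
    case True
    then show ?thesis using assms by simp
  next
    case False
    then have "\<forall>(c, j)\<in>set l1. j \<noteq> k" "\<forall>(c, j)\<in>set l2. j \<noteq> k"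
      using assms(2,3) by auto
    then show ?thesis by (simp add: vfl_other)
  qed
qed

lemma hol_vf_vfl: "\<forall>(c, j)\<in>set l. c \<in> SF \<Longrightarrow> hol_vf (vfl l)"
proof (induction l)
  case Nil
  then show ?case by (simp add: hol_vf_def vfl_def)
next
  case (Cons a l)
  obtain c j where a: "a = (c, j)" by force
  have "vfl (a # l) k = (\<lambda>S x. (if j = k then c S x else 0) + vfl l k S x)" for k
    by (simp add: vfl_def a)
  moreover have "(\<lambda>S x. if j = k then c S x else 0) \<in> SF" for k
    using Cons.prems a by (cases "j = k") auto
  ultimately show ?case using Cons a by (auto simp: hol_vf_def intro!: SF_add)
qed

lemma homog_vf_vfl: "\<forall>(c, j)\<in>set l. homog (p + coord_parity j) c \<Longrightarrow> homog_vf p (vfl l)"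
proof (induction l)
  case Nil
  then show ?case by (simp add: homog_vf_def vfl_def)
next
  case (Cons a l)
  obtain c j where a: "a = (c, j)" by force
  have "vfl (a # l) k = (\<lambda>S x. (if j = k then c S x else 0) + vfl l k S x)" for k
    by (simp add: vfl_def a)
  moreover have "homog (p + coord_parity k) (\<lambda>S x. if j = k then c S x else 0)" for k
    using Cons.prems a by (cases "j = k") auto
  ultimately show ?case using Cons a by (auto simp: homog_vf_def intro!: homog_add)
qed

section \<open>The distribution \<open>H\<close>\<close>

text \<open>Indices \<open>free_coord\<close> are those of \<open>x, y, \<lambda>, \<nu>, \<tau>, \<theta>, \<phi>\<close>, at which \<open>gen i\<close> has components
  \<open>\<delta>\<^sub>i\<^sub>l\<close>; indices \<open>dep_coords\<close> are those of \<open>u, u\<^sub>x, u\<^sub>y, u\<^sub>\<nu>, u\<^sub>\<tau>\<close>. A field lies in \<open>H\<close> iff each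
  of its \<open>dep_coords\<close> components is the one prescribed by its \<open>free_coord\<close> components.\<close>

definition free_coord :: "nat list" where
  "free_coord = [0, 1, 5, 6, 7, 10, 11]"

definition dep_coords :: "nat set" where
  "dep_coords = {2, 3, 4, 8, 9}"

definition gen_parity :: "nat list" where
  "gen_parity = [0, 0, 0, 1, 1, 1, 1]"

definition gen :: "nat \<Rightarrow> vf" where
  "gen i = Hgens ! i"

definition H_defect :: "vf \<Rightarrow> nat \<Rightarrow> sfun" where
  "H_defect V m = sdiff (V m) (\<lambda>S x. \<Sum>i<7. smult (V (free_coord ! i)) (gen i m) S x)"

definition in_H :: "vf \<Rightarrow> bool" where
  "in_H V \<longleftrightarrow> (\<forall>l<7. V (free_coord ! l) \<in> SF) \<and> (\<forall>k. 12 \<le> k \<longrightarrow> V k = (\<lambda>S x. 0)) \<and>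
     (\<forall>m\<in>dep_coords. H_defect V m = (\<lambda>S x. 0))"

definition Dx_terms :: vf where
  "Dx_terms = vfl
    [(sfun_of [({}, \<lambda>x. 1)], 0),
     (sfun_of [({}, \<lambda>x. x 3)], 2),
     (sfun_of [({}, \<lambda>x. 1 / 3 * (x 5 * x 5 * x 5)), ({4, 5}, \<lambda>x. 2 * (x 5))], 3),
     (sfun_of [({}, \<lambda>x. 1 / 2 * (x 5 * x 5)), ({4, 5}, \<lambda>x. 1)], 4),
     (sfun_of [({5}, \<lambda>x. x 5)], 8),
     (sfun_of [({4}, \<lambda>x. - (x 5))], 9)]"

definition Dy_terms :: vf where
  "Dy_terms = vfl
    [(sfun_of [({}, \<lambda>x. 1)], 1),
     (sfun_of [({}, \<lambda>x. x 4)], 2),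
     (sfun_of [({}, \<lambda>x. 1 / 2 * (x 5 * x 5)), ({4, 5}, \<lambda>x. 1)], 3),
     (sfun_of [({}, \<lambda>x. x 5)], 4),
     (sfun_of [({5}, \<lambda>x. 1)], 8),
     (sfun_of [({4}, \<lambda>x. - 1)], 9)]"

definition Dlam_terms :: vf where
  "Dlam_terms = vfl
    [(sfun_of [({}, \<lambda>x. 1)], 5)]"

definition Dnu_terms :: vf where
  "Dnu_terms = vfl
    [(sfun_of [({2}, \<lambda>x. 1)], 2),
     (sfun_of [({5}, \<lambda>x. x 5)], 3),
     (sfun_of [({5}, \<lambda>x. 1)], 4),
     (sfun_of [({}, \<lambda>x. 1)], 6),
     (sfun_of [({}, \<lambda>x. - (x 5))], 9)]"

definition Dtau_terms :: vf where
  "Dtau_terms = vfl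
    [(sfun_of [({3}, \<lambda>x. 1)], 2),
     (sfun_of [({4}, \<lambda>x. - (x 5))], 3),
     (sfun_of [({4}, \<lambda>x. - 1)], 4),
     (sfun_of [({}, \<lambda>x. 1)], 7),
     (sfun_of [({}, \<lambda>x. x 5)], 8)]"

definition Dth_terms :: vf where
  "Dth_terms = vfl
    [(sfun_of [({}, \<lambda>x. 1)], 10)]"

definition Dph_terms :: vf where
  "Dph_terms = vfl
    [(sfun_of [({}, \<lambda>x. 1)], 11)]"

definition C_terms :: vf where
  "C_terms = vfl
    [(sfun_of [({}, \<lambda>x. 1)], 0),
     (sfun_of [({}, \<lambda>x. - (x 5))], 1),
     (sfun_of [({}, \<lambda>x. - (x 4 * x 5) + x 3), ({2, 4}, \<lambda>x. 1), ({3, 5}, \<lambda>x. 1)], 2),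
     (sfun_of [({}, \<lambda>x. - (1 / 6 * (x 5 * x 5 * x 5))), ({4, 5}, \<lambda>x. - (x 5))], 3),
     (sfun_of [({}, \<lambda>x. - (1 / 2 * (x 5 * x 5))), ({4, 5}, \<lambda>x. - 1)], 4),
     (sfun_of [({4}, \<lambda>x. - 1)], 6),
     (sfun_of [({5}, \<lambda>x. - 1)], 7),
     (sfun_of [({5}, \<lambda>x. - (x 5))], 8),
     (sfun_of [({4}, \<lambda>x. x 5)], 9)]"

lemma to_sdiff: "(\<lambda>S x. F S x - G S x) = sdiff F G"
  and to_sadd: "(\<lambda>S x. F S x + G S x) = sadd F G"
  and to_sscale: "(\<lambda>S x. c * F S x) = sscale c F"
  by (simp_all add: sdiff_def sadd_def sscale_def)

lemmas eval_terms = sconst_eq_sfun_of ecoord_eq_sfun_of ocoord_eq_sfun_of sadd_sfun_of sscale_sfun_of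
  sdiff_sfun_of to_sdiff to_sadd to_sscale vfl_Nil vfl_Cons sgn2_insert_left sgn_below_insert
  Int_insert_left insert_Diff_if smult_sfun_of dcoord_sfun_of vapply_vfl_Nil vapply_vfl_Cons

lemma set_eq_iff_Ball: "((A::nat set) = B) \<longleftrightarrow> (\<forall>i\<in>A. i \<in> B) \<and> (\<forall>i\<in>B. i \<in> A)"
  by auto

lemma less_7_cases: "(i::nat) < 7 \<longleftrightarrow> i = 0 \<or> i = 1 \<or> i = 2 \<or> i = 3 \<or> i = 4 \<or> i = 5 \<or> i = 6"
  by arith

lemma less_12_cases: "(i::nat) < 12 \<longleftrightarrow> i = 0 \<or> i = 1 \<or> i = 2 \<or> i = 3 \<or> i = 4 \<or> i = 5 \<or> i = 6
   \<or> i = 7 \<or> i = 8 \<or> i = 9 \<or> i = 10 \<or> i = 11"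
  by arith

lemma gen_eq_terms:
  "gen 0 = Dx_terms" "gen 1 = Dy_terms" "gen 2 = Dlam_terms" "gen 3 = Dnu_terms"
  "gen 4 = Dtau_terms" "gen 5 = Dth_terms" "gen 6 = Dph_terms"
  unfolding gen_def Hgens_def Dx_def Dy_def Dnu_def Dtau_def Dx_terms_def Dy_terms_def Dlam_terms_def
    Dnu_terms_def Dtau_terms_def Dth_terms_def Dph_terms_def
  by (simp, rule vfl_eqI, simp only: less_12_cases,
      (elim disjE; simp add: eval_terms; ((rule sfun_of_eqI),
        (simp only: list.map list.set append.simps fst_conv ball_simps coeff_terms_simps),
        (simp only: set_eq_iff_Ball ball_simps insert_iff empty_iff), simp add: algebra_simps)?),
      simp, simp)+

lemma Cfield_high: "12 \<le> k \<Longrightarrow> Cfield k = (\<lambda>S x. 0)"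
  by (simp add: Cfield_def Dx_def Dy_def Dnu_def Dtau_def vfl_other)

lemma Cfield_sdiff:
  "Cfield k = sdiff (sdiff (sdiff (Dx k) (smult c_lam (Dy k))) (smult c_th (Dnu k))) (smult c_ph (Dtau k))"
  by (simp add: Cfield_def sdiff_def)

lemma Cfield_eq_terms: "Cfield = C_terms"
proof -
  let ?l = "[(Cfield 0, 0), (Cfield 1, 1), (Cfield 2, 2), (Cfield 3, 3), (Cfield 4, 4), (Cfield 5, 5),
    (Cfield 6, 6), (Cfield 7, 7), (Cfield 8, 8), (Cfield 9, 9), (Cfield 10, 10), (Cfield 11, 11)]"
  have "Cfield = vfl ?l"
  proof (rule ext)
    fix k
    show "Cfield k = vfl ?l k"
    proof (cases "k < 12")
      case True
      then show ?thesis unfolding less_12_cases by (elim disjE) (simp_all add: vfl_def)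
    next
      case False
      then show ?thesis by (simp add: Cfield_high vfl_other)
    qed
  qed
  also have "\<dots> = C_terms"
    unfolding C_terms_def
    by (rule vfl_eqI, simp only: less_12_cases,
        (elim disjE; simp add: eval_terms Cfield_sdiff Dx_def Dy_def Dnu_def Dtau_def;
         ((rule sfun_of_eqI), (simp only: list.map list.set append.simps fst_conv ball_simps coeff_terms_simps),
          (simp only: set_eq_iff_Ball ball_simps insert_iff empty_iff), simp add: algebra_simps)?),
        simp, simp)
  finally show ?thesis .
qed

lemma hbr_sdiff: "hbr p q A B k = sdiff (vapply A (B k)) (sscale ((-1) ^ (p * q)) (vapply B (A k)))"
  by (simp add: hbr_def sdiff_def sscale_def)

lemma sum_lessThan_7:
  "(\<lambda>S x. \<Sum>i<(7::nat). F i S x) = sadd (F 0) (sadd (F 1) (sadd (F 2) (sadd (F 3) (sadd (F 4) (sadd (F 5) (F 6))))))"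
  by (simp add: sadd_def numeral_eq_Suc add.assoc)

lemma sfun_of_Cons_zero: "sfun_of ((T, \<lambda>x. 0) # L) = sfun_of L"
  and zero_eq_sfun_of: "(\<lambda>S x. 0) = sfun_of []"
  by (simp_all add: sfun_of_def)

lemmas explicit_fields = Dx_terms_def Dy_terms_def Dlam_terms_def Dnu_terms_def Dtau_terms_def Dth_terms_def
  Dph_terms_def C_terms_def free_coord_def gen_parity_def hbr_sdiff sum_lessThan_7 H_defect_def
  gen_eq_terms gen_eq_terms(2)[unfolded One_nat_def] Cfield_eq_terms

lemma gen_free_coord:
  "i < 7 \<Longrightarrow> l < 7 \<Longrightarrow> gen i (free_coord ! l) = (if i = l then sconst 1 else (\<lambda>S x. 0))"
  unfolding less_7_cases
  by (elim disjE; simp only: explicit_fields; simp add: eval_terms sfun_of_Cons_zero zero_eq_sfun_of;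
      ((rule sfun_of_eqI), (simp only: list.map list.set append.simps fst_conv ball_simps coeff_terms_simps),
       (simp only: set_eq_iff_Ball ball_simps insert_iff empty_iff), simp add: algebra_simps)?)

lemma gen_high: "i < 7 \<Longrightarrow> 12 \<le> k \<Longrightarrow> gen i k = (\<lambda>S x. 0)"
  unfolding less_7_cases by (elim disjE; simp add: explicit_fields vfl_other)

lemma hol_vf_gen: "i < 7 \<Longrightarrow> hol_vf (gen i)"
  and homog_vf_gen: "i < 7 \<Longrightarrow> homog_vf (gen_parity ! i) (gen i)"
  unfolding less_7_cases
  by (elim disjE; simp add: explicit_fields; (intro hol_vf_vfl homog_vf_vfl); simp add: coord_parity_def;
      (intro conjI SF_sfun_of homog_sfun_of); simp)+

lemma hol_vf_Cfield: "hol_vf Cfield"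
  and homog_vf_Cfield: "homog_vf 0 Cfield"
  unfolding Cfield_eq_terms C_terms_def
  by ((intro hol_vf_vfl homog_vf_vfl); simp add: coord_parity_def; (intro conjI SF_sfun_of homog_sfun_of); simp)+

lemma Cfield_free_coord:
  "Cfield 0 = sconst 1" "Cfield 1 = sscale (-1) c_lam" "Cfield 5 = (\<lambda>S x. 0)"
  "Cfield 6 = sscale (-1) c_th" "Cfield 7 = sscale (-1) c_ph" "Cfield 10 = (\<lambda>S x. 0)"
  "Cfield 11 = (\<lambda>S x. 0)"
  by (simp only: explicit_fields; simp add: eval_terms sfun_of_Cons_zero zero_eq_sfun_of;
      ((rule sfun_of_eqI), (simp only: list.map list.set append.simps fst_conv ball_simps coeff_terms_simps),
       (simp only: set_eq_iff_Ball ball_simps insert_iff empty_iff), simp add: algebra_simps)?)+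

lemma H_defect_Cfield: "m \<in> dep_coords \<Longrightarrow> H_defect Cfield m = (\<lambda>S x. 0)"
  unfolding dep_coords_def
  by (simp only: insert_iff empty_iff; elim disjE; simp only: explicit_fields;
      simp add: eval_terms sfun_of_Cons_zero zero_eq_sfun_of;
      ((rule sfun_of_eqI), (simp only: list.map list.set append.simps fst_conv ball_simps coeff_terms_simps),
       (simp only: set_eq_iff_Ball ball_simps insert_iff empty_iff), simp add: algebra_simps)?)

lemma H_defect_hbr_Cfield_gen:
  "i < 7 \<Longrightarrow> m \<in> dep_coords \<Longrightarrow> H_defect (hbr 0 (gen_parity ! i) Cfield (gen i)) m = (\<lambda>S x. 0)"
  unfolding less_7_cases dep_coords_def
  by (elim disjE; simp only: insert_iff empty_iff; elim disjE; simp only: explicit_fields;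
      simp add: eval_terms sfun_of_Cons_zero zero_eq_sfun_of;
      ((rule sfun_of_eqI), (simp only: list.map list.set append.simps fst_conv ball_simps coeff_terms_simps),
       (simp only: set_eq_iff_Ball ball_simps insert_iff empty_iff), simp add: algebra_simps)?)

text \<open>The Levi bracket of \<open>H\<close> against \<open>\<partial>\<^sub>\<lambda>\<close> and \<open>D\<^sub>y\<close>, read off at \<open>u\<^sub>y, u\<^sub>\<nu>, u\<^sub>\<tau>\<close>.\<close>

lemma H_defect_hbr_gen_Dlam:
  "i < 7 \<Longrightarrow> H_defect (hbr (gen_parity ! i) 0 (gen i) (gen 2)) 4 =
    (if i = 0 then sscale (-1) c_lam else if i = 1 then sconst (-1) else (\<lambda>S x. 0))"
  "i < 7 \<Longrightarrow> H_defect (hbr (gen_parity ! i) 0 (gen i) (gen 2)) 8 =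
    (if i = 0 then sscale (-1) c_ph else if i = 4 then sconst (-1) else (\<lambda>S x. 0))"
  "i < 7 \<Longrightarrow> H_defect (hbr (gen_parity ! i) 0 (gen i) (gen 2)) 9 =
    (if i = 0 then c_th else if i = 3 then sconst 1 else (\<lambda>S x. 0))"
  unfolding less_7_cases
  by (elim disjE; simp only: explicit_fields; simp add: eval_terms sfun_of_Cons_zero zero_eq_sfun_of;
      ((rule sfun_of_eqI), (simp only: list.map list.set append.simps fst_conv ball_simps coeff_terms_simps),
       (simp only: set_eq_iff_Ball ball_simps insert_iff empty_iff), simp add: algebra_simps)?)+

lemma H_defect_hbr_gen_Dy:
  "i < 7 \<Longrightarrow> H_defect (hbr (gen_parity ! i) 0 (gen i) (gen 1)) 4 = (if i = 2 then sconst 1 else (\<lambda>S x. 0))"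
  "i < 7 \<Longrightarrow> H_defect (hbr (gen_parity ! i) 0 (gen i) (gen 1)) 8 = (if i = 6 then sconst 1 else (\<lambda>S x. 0))"
  "i < 7 \<Longrightarrow> H_defect (hbr (gen_parity ! i) 0 (gen i) (gen 1)) 9 = (if i = 5 then sconst (-1) else (\<lambda>S x. 0))"
  unfolding less_7_cases
  by (elim disjE; simp only: explicit_fields; simp add: eval_terms sfun_of_Cons_zero zero_eq_sfun_of;
      ((rule sfun_of_eqI), (simp only: list.map list.set append.simps fst_conv ball_simps coeff_terms_simps),
       (simp only: set_eq_iff_Ball ball_simps insert_iff empty_iff), simp add: algebra_simps)?)+

section \<open>Sections of \<open>H\<close>\<close>

lemma sum_smult_gen_free_coord:
  assumes "l < 7" "\<And>i. i < 7 \<Longrightarrow> supported (g i)"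
  shows "(\<lambda>S x. \<Sum>i<7. smult (g i) (gen i (free_coord ! l)) S x) = g l"
proof -
  have "smult (g i) (gen i (free_coord ! l)) S x = (if i = l then g l S x else 0)" if "i < 7" for i S x
    using that assms gen_free_coord[OF that assms(1)] smult_sconst_right[of "g l" 1] by auto
  then show ?thesis using assms(1) by (simp add: fun_eq_iff)
qed

lemma H_defect_eq_zero_iff:
  "H_defect V m = (\<lambda>S x. 0) \<longleftrightarrow> V m = (\<lambda>S x. \<Sum>i<7. smult (V (free_coord ! i)) (gen i m) S x)"
  by (auto simp: H_defect_def sdiff_def fun_eq_iff)

lemma in_H_expansion:
  assumes "in_H V"
  shows "V = (\<lambda>k S x. \<Sum>i<7. smult (V (free_coord ! i)) (gen i k) S x)"
proof (rule ext)
  fix k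
  have supp: "\<And>i. i < 7 \<Longrightarrow> supported (V (free_coord ! i))"
    using assms by (auto simp: in_H_def SF_iff)
  show "V k = (\<lambda>S x. \<Sum>i<7. smult (V (free_coord ! i)) (gen i k) S x)"
  proof (cases "k \<in> set free_coord")
    case True
    then obtain l where "l < length free_coord" "k = free_coord ! l"
      by (metis in_set_conv_nth)
    moreover have "length free_coord = 7" by (simp add: free_coord_def)
    ultimately show ?thesis using sum_smult_gen_free_coord[OF _ supp] by simp
  next
    case False
    moreover have "k < 12 \<Longrightarrow> k \<in> set free_coord \<or> k \<in> dep_coords"
      unfolding less_12_cases by (auto simp: free_coord_def dep_coords_def)
    ultimately have "12 \<le> k \<or> k \<in> dep_coords"
      by linarith
    then show ?thesis
      using assms gen_high by (auto simp: in_H_def H_defect_eq_zero_iff)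
  qed
qed

lemma GammaH_iff_in_H: "V \<in> GammaH \<longleftrightarrow> in_H V"
proof
  assume "V \<in> GammaH"
  then obtain f where f: "\<forall>i<7. f i \<in> SF" and V: "V = (\<lambda>k S x. \<Sum>i<7. smult (f i) (gen i k) S x)"
    unfolding GammaH_def gen_def by blast
  have free: "V (free_coord ! l) = f l" if "l < 7" for l
    using sum_smult_gen_free_coord[OF that, of f] f V by (simp add: SF_iff)
  have "H_defect V m = (\<lambda>S x. 0)" for m
    unfolding H_defect_eq_zero_iff using V free by simp
  then show "in_H V"
    using f free V gen_high by (simp add: in_H_def)
next
  assume "in_H V"
  then show "V \<in> GammaH"
    unfolding GammaH_def gen_def[symmetric]
    using in_H_expansion by (auto simp: in_H_def intro!: exI[of _ "\<lambda>i. V (free_coord ! i)"])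
qed

lemma in_H_eqI:
  assumes "in_H V" "in_H W" "\<And>l. l < 7 \<Longrightarrow> V (free_coord ! l) = W (free_coord ! l)"
  shows "V = W"
  using in_H_expansion[OF assms(1)] in_H_expansion[OF assms(2)] assms(3) by simp

lemma hol_vf_in_H: "in_H V \<Longrightarrow> hol_vf V"
  using hol_vf_gen by (subst in_H_expansion) (auto simp: in_H_def hol_vf_def intro!: SF_sum SF_smult)

lemma H_defect_smult_sum:
  assumes "finite I"
  shows "H_defect (\<lambda>k S x. \<Sum>j\<in>I. smult (a j) (V j k) S x) m = (\<lambda>S x. \<Sum>j\<in>I. smult (a j) (H_defect (V j) m) S x)"
proof -
  have "smult (a j) (H_defect (V j) m) = (\<lambda>S x. smult (a j) (V j m) S x -
      (\<Sum>i<7. smult (smult (a j) (V j (free_coord ! i))) (gen i m) S x))" for j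
    by (simp add: H_defect_def sdiff_def smult_diff_right smult_sum_right smult_assoc)
  then show ?thesis
    by (simp add: H_defect_def sdiff_def smult_sum_left sum_subtractf) (simp add: fun_eq_iff sum.swap[of _ I])
qed

lemma in_H_smult_sum:
  assumes "finite I" "\<And>j. j \<in> I \<Longrightarrow> a j \<in> SF" "\<And>j. j \<in> I \<Longrightarrow> in_H (V j)"
  shows "in_H (\<lambda>k S x. \<Sum>j\<in>I. smult (a j) (V j k) S x)"
  using assms unfolding in_H_def H_defect_smult_sum[OF assms(1)]
  by (auto intro!: SF_sum SF_smult)

lemma in_H_vscale: "in_H V \<Longrightarrow> a \<in> SF \<Longrightarrow> in_H (vscale a V)"
  using in_H_smult_sum[of "{0::nat}" "\<lambda>_. a" "\<lambda>_. V"] by (simp add: vscale_def)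

lemma in_H_add:
  assumes "in_H V" "in_H W"
  shows "in_H (\<lambda>k S x. V k S x + W k S x)"
proof -
  have "supported (V k)" "supported (W k)" for k
    using assms by (auto dest!: hol_vf_in_H simp: hol_vf_def SF_iff)
  then show ?thesis
    using in_H_smult_sum[of "{0::nat, 1}" "\<lambda>_. sconst 1" "\<lambda>j. if j = 0 then V else W"] assms
    by (simp add: smult_sconst_left)
qed

lemma in_H_cmult:
  assumes "in_H V"
  shows "in_H (\<lambda>k S x. c * V k S x)"
proof -
  have "supported (V k)" for k
    using hol_vf_in_H[OF assms] by (simp add: hol_vf_def SF_supported)
  then show ?thesis
    using in_H_vscale[OF assms, of "sconst c"] by (simp add: vscale_def smult_sconst_left)
qed

lemma in_H_lincomb:
  assumes "in_H V" "in_H W" "a \<in> SF" "b \<in> SF"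
  shows "in_H (\<lambda>k S x. smult a (V k) S x + c * smult b (W k) S x)"
  using in_H_add[OF in_H_vscale[OF assms(1,3)] in_H_cmult[OF in_H_vscale[OF assms(2,4)]]]
  by (simp add: vscale_def)

lemma in_H_sum:
  "finite I \<Longrightarrow> (\<And>i. i \<in> I \<Longrightarrow> in_H (V i)) \<Longrightarrow> in_H (\<lambda>k S x. \<Sum>i\<in>I. V i k S x)"
proof (induction I rule: finite_induct)
  case empty
  then show ?case by (simp add: in_H_def H_defect_def sdiff_def)
next
  case (insert a I)
  then show ?case using in_H_add[of "V a" "\<lambda>k S x. \<Sum>i\<in>I. V i k S x"] by simp
qed

lemma in_H_gen:
  assumes "i < 7"
  shows "in_H (gen i)"
proof -
  have "smult (gen i (free_coord ! l)) (gen l m) S x = (if l = i then gen i m S x else 0)"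
    if "l < 7" for l m S x
    using hol_vf_gen[OF assms] gen_free_coord[OF assms that]
    by (auto simp: hol_vf_def SF_supported smult_sconst_left)
  then have "H_defect (gen i) m = (\<lambda>S x. 0)" for m
    using assms by (simp add: H_defect_eq_zero_iff)
  then show ?thesis
    using assms hol_vf_gen gen_high by (simp add: in_H_def hol_vf_def)
qed

section \<open>\<open>C\<close> is a Cauchy characteristic\<close>

lemma in_H_Cfield: "in_H Cfield"
  using hol_vf_Cfield H_defect_Cfield Cfield_high by (simp add: in_H_def hol_vf_def)

lemma in_H_hbr_Cfield_gen:
  assumes "i < 7"
  shows "in_H (hbr 0 (gen_parity ! i) Cfield (gen i))"
  unfolding in_H_def
proof (intro conjI allI impI ballI)
  show "hbr 0 (gen_parity ! i) Cfield (gen i) (free_coord ! l) \<in> SF" for l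
    unfolding hbr_def using hol_vf_Cfield hol_vf_gen[OF assms]
    by (intro SF_diff SF_cmult SF_vapply) (auto simp: hol_vf_def)
  show "hbr 0 (gen_parity ! i) Cfield (gen i) k = (\<lambda>S x. 0)" if "12 \<le> k" for k
    using that gen_high[OF assms] Cfield_high by (simp add: hbr_def)
  show "H_defect (hbr 0 (gen_parity ! i) Cfield (gen i)) m = (\<lambda>S x. 0)" if "m \<in> dep_coords" for m
    using H_defect_hbr_Cfield_gen assms that by blast
qed

text \<open>For homogeneous \<open>f, g\<close>, the Leibniz rule gives
  \<open>[f C, g H\<^sub>i] = (f C)(g) H\<^sub>i \<plusminus> g (f [C, H\<^sub>i] \<plusminus> H\<^sub>i(f) C)\<close>, a combination of \<open>H\<^sub>i\<close>, \<open>[C, H\<^sub>i]\<close> and \<open>C\<close>.\<close>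

lemma in_H_sbr_homog_Cfield_gen:
  assumes s: "s < 2" and t: "t < 2" and i: "i < 7" and f: "f \<in> SF" and g: "g \<in> SF"
  shows "in_H (sbr (vscale (sproj s f) Cfield) (vscale (sproj t g) (gen i)))"
proof -
  let ?fs = "sproj s f" and ?gt = "sproj t g"
  let ?A = "vscale ?fs Cfield" and ?B = "vscale ?gt (gen i)"
  have fs: "?fs \<in> SF" "homog s ?fs" and gt: "?gt \<in> SF" "homog t ?gt"
    using f g s t by (auto simp: SF_sproj homog_sproj)
  have A: "homog_vf s ?A" "hol_vf ?A"
    using homog_vf_vscale[OF homog_vf_Cfield fs(2)] hol_vf_vscale[OF fs(1) hol_vf_Cfield] by simp_all
  have "homog_vf ((t + gen_parity ! i) mod 2) ?B"
    using homog_vf_vscale[OF homog_vf_gen[OF i] gt(2)] by (simp add: homog_vf_mod2)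
  then have "sbr ?A ?B = hbr s ((t + gen_parity ! i) mod 2) ?A ?B"
    by (rule sbr_eq_hbr[OF A(1)]) (simp_all add: s)
  also have "\<dots> = (\<lambda>k S x. smult (vapply ?A ?gt) (gen i k) S x
      + (-1) ^ (s * t) * smult ?gt (hbr s (gen_parity ! i) ?A (gen i) k) S x)"
    by (rule hbr_vscale_right[OF A homog_vf_gen[OF i] hol_vf_gen[OF i] gt]) (simp add: even_add)
  finally have sbr: "sbr ?A ?B = \<dots>" .
  have "hbr s (gen_parity ! i) ?A (gen i) = (\<lambda>k S x. smult ?fs (hbr 0 (gen_parity ! i) Cfield (gen i) k) S x
      - (-1) ^ (s * gen_parity ! i) * smult (vapply (gen i) ?fs) (Cfield k) S x)"
    by (rule hbr_vscale_left[OF homog_vf_Cfield hol_vf_Cfield homog_vf_gen[OF i] hol_vf_gen[OF i] fs]) simp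
  then have "in_H (hbr s (gen_parity ! i) ?A (gen i))"
    using in_H_lincomb[OF in_H_hbr_Cfield_gen[OF i] in_H_Cfield fs(1) SF_vapply[OF hol_vf_gen[OF i] fs(1)],
        of "- ((-1) ^ (s * gen_parity ! i))"]
    by simp
  then show ?thesis
    unfolding sbr by (rule in_H_lincomb[OF in_H_gen[OF i] _ SF_vapply[OF A(2) gt(1)] gt(1)])
qed

lemma smult_sum_sproj_split:
  "(\<lambda>k S x. \<Sum>i\<in>I. smult (g i) (V i k) S x) =
    (\<lambda>k S x. \<Sum>p\<in>I \<times> {..<2}. vscale (sproj (snd p) (g (fst p))) (V (fst p)) k S x)"
proof -
  have "(\<Sum>p\<in>I \<times> {..<2}. smult (sproj (snd p) (g (fst p))) (V (fst p) k) S x)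
      = (\<Sum>i\<in>I. \<Sum>t<2. smult (sproj t (g i)) (V i k) S x)" for k S x
    by (subst sum.cartesian_product) (simp add: split_def)
  then show ?thesis by (simp add: vscale_def smult_sproj_sum)
qed

lemma in_H_sbr_vscale_Cfield:
  assumes f: "f \<in> SF" and Y: "Y \<in> GammaH"
  shows "in_H (sbr (vscale f Cfield) Y)"
proof -
  obtain g where g: "\<forall>i<7. g i \<in> SF" and Y: "Y = (\<lambda>k S x. \<Sum>i<7. smult (g i) (gen i k) S x)"
    using Y unfolding GammaH_def gen_def by blast
  define P where "P = {..<7::nat} \<times> {..<2::nat}"
  define A where "A s = vscale (sproj s f) Cfield" for s
  define B where "B p = vscale (sproj (snd p) (g (fst p))) (gen (fst p))" for p
  have P: "finite P" "\<And>p. p \<in> P \<Longrightarrow> fst p < 7 \<and> snd p < 2"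
    by (auto simp: P_def)
  have "vscale f Cfield = (\<lambda>k S x. \<Sum>s<2. A s k S x)"
    by (simp add: A_def vscale_def smult_sproj_sum)
  moreover have "Y = (\<lambda>k S x. \<Sum>p\<in>P. B p k S x)"
    unfolding Y B_def P_def by (rule smult_sum_sproj_split)
  moreover have "hol_vf (A s)" for s
    unfolding A_def using SF_sproj[OF f] hol_vf_Cfield by (rule hol_vf_vscale)
  moreover have "hol_vf (B p)" if "p \<in> P" for p
    unfolding B_def using g P(2)[OF that] by (intro hol_vf_vscale SF_sproj hol_vf_gen) auto
  ultimately have "sbr (vscale f Cfield) Y = (\<lambda>k S x. \<Sum>s<2. \<Sum>p\<in>P. sbr (A s) (B p) k S x)"
    using P(1) by (simp add: sbr_sum_left sbr_sum_right)
  moreover have "in_H (sbr (A s) (B p))" if "s < 2" "p \<in> P" for s p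
    unfolding A_def B_def using that P(2)[OF that(2)] f g
    by (intro in_H_sbr_homog_Cfield_gen) auto
  ultimately show ?thesis
    using P(1) by (auto intro!: in_H_sum)
qed

lemma vscale_Cfield_in_ChH: "f \<in> SF \<Longrightarrow> vscale f Cfield \<in> ChH"
  using in_H_vscale[OF in_H_Cfield] in_H_sbr_vscale_Cfield by (simp add: ChH_def GammaH_iff_in_H)

section \<open>Every Cauchy characteristic is a multiple of \<open>C\<close>\<close>

lemma sbr_vscale_gen_even_gen:
  assumes i: "i < 7" and j: "j < 7" "gen_parity ! j = 0" and f: "f \<in> SF" "homog t f" "t < 2"
  shows "sbr (vscale f (gen i)) (gen j) = (\<lambda>k S x. smult f (hbr (gen_parity ! i) 0 (gen i) (gen j) k) S x
    - smult (vapply (gen j) f) (gen i k) S x)"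
proof -
  have "homog_vf ((t + gen_parity ! i) mod 2) (vscale f (gen i))"
    using homog_vf_vscale[OF homog_vf_gen[OF i] f(2)] by (simp add: homog_vf_mod2)
  then have "sbr (vscale f (gen i)) (gen j) = hbr ((t + gen_parity ! i) mod 2) 0 (vscale f (gen i)) (gen j)"
    using homog_vf_gen[OF j(1)] j(2) by (intro sbr_eq_hbr) simp_all
  also have "\<dots> = (\<lambda>k S x. smult f (hbr (gen_parity ! i) 0 (gen i) (gen j) k) S x
      - (-1) ^ (((t + gen_parity ! i) mod 2) * 0) * smult (vapply (gen j) f) (gen i k) S x)"
    using homog_vf_gen[OF j(1)] j(2)
    by (intro hbr_vscale_left[OF homog_vf_gen[OF i] hol_vf_gen[OF i] _ hol_vf_gen[OF j(1)] f(1,2)])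
       (simp_all add: even_add)
  finally show ?thesis by simp
qed

text \<open>If \<open>X = \<Sum> f\<^sub>i H\<^sub>i\<close> and \<open>[X, H\<^sub>j] \<in> H\<close>, then modulo \<open>H\<close> the bracket is \<open>\<Sum> f\<^sub>i [H\<^sub>i, H\<^sub>j]\<close>, so the
  coefficients satisfy the linear relations given by the Levi bracket.\<close>

lemma Levi_relation:
  assumes X: "in_H X" and j: "j = 1 \<or> j = 2" and br: "in_H (sbr X (gen j))" and m: "m \<in> dep_coords"
  shows "(\<Sum>i<7. smult (X (free_coord ! i)) (H_defect (hbr (gen_parity ! i) 0 (gen i) (gen j)) m) S x) = 0"
proof -
  define f where "f i = X (free_coord ! i)" for i
  define P where "P = {..<7::nat} \<times> {..<2::nat}"
  define fp where "fp p = sproj (snd p) (f (fst p))" for p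
  define K where "K i = hbr (gen_parity ! i) 0 (gen i) (gen j)" for i
  have P: "finite P" "\<And>p. p \<in> P \<Longrightarrow> fst p < 7 \<and> snd p < 2"
    by (auto simp: P_def)
  have j7: "j < 7" "gen_parity ! j = 0"
    using j by (auto simp: gen_parity_def)
  have fp: "fp p \<in> SF" "homog (snd p) (fp p)" if "p \<in> P" for p
    using X P(2)[OF that] by (auto simp: fp_def f_def in_H_def SF_sproj homog_sproj)
  have "X = (\<lambda>k S x. \<Sum>p\<in>P. vscale (fp p) (gen (fst p)) k S x)"
    unfolding fp_def P_def f_def by (subst in_H_expansion[OF X]) (rule smult_sum_sproj_split)
  moreover have "hol_vf (vscale (fp p) (gen (fst p)))" if "p \<in> P" for p
    using fp[OF that] P(2)[OF that] by (intro hol_vf_vscale hol_vf_gen) auto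
  ultimately have "sbr X (gen j) = (\<lambda>k S x. \<Sum>p\<in>P. sbr (vscale (fp p) (gen (fst p))) (gen j) k S x)"
    using P(1) by (simp add: sbr_sum_left)
  also have "\<dots> = (\<lambda>k S x. (\<Sum>p\<in>P. smult (fp p) (K (fst p) k) S x)
      - (\<Sum>p\<in>P. smult (vapply (gen j) (fp p)) (gen (fst p) k) S x))"
    using sbr_vscale_gen_even_gen[OF _ j7 fp] P(2)
    by (simp add: K_def sum_subtractf cong: sum.cong)
  finally have "(\<lambda>k S x. \<Sum>p\<in>P. smult (fp p) (K (fst p) k) S x) =
      (\<lambda>k S x. sbr X (gen j) k S x + (\<Sum>p\<in>P. smult (vapply (gen j) (fp p)) (gen (fst p) k) S x))"
    by (simp add: fun_eq_iff)
  moreover have "in_H (\<lambda>k S x. \<Sum>p\<in>P. smult (vapply (gen j) (fp p)) (gen (fst p) k) S x)"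
    using P fp by (intro in_H_smult_sum SF_vapply hol_vf_gen in_H_gen j7) auto
  ultimately have "in_H (\<lambda>k S x. \<Sum>p\<in>P. smult (fp p) (K (fst p) k) S x)"
    using in_H_add[OF br] by simp
  then have "H_defect (\<lambda>k S x. \<Sum>p\<in>P. smult (fp p) (K (fst p) k) S x) m = (\<lambda>S x. 0)"
    using m by (simp add: in_H_def)
  moreover have "(\<Sum>p\<in>P. smult (fp p) (H_defect (K (fst p)) m) S x)
      = (\<Sum>i<7. \<Sum>t<2. smult (sproj t (f i)) (H_defect (K i) m) S x)"
    unfolding P_def fp_def by (subst sum.cartesian_product) (simp add: split_def)
  ultimately show ?thesis
    unfolding H_defect_smult_sum[OF P(1)] by (simp add: fun_eq_iff f_def K_def smult_sproj_sum)
qed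

lemma ChH_free_coord:
  assumes X: "X \<in> ChH" and l: "l < 7"
  shows "X (free_coord ! l) = smult (X 0) (Cfield (free_coord ! l))"
proof -
  have iX: "in_H X"
    using X by (simp add: ChH_def GammaH_iff_in_H)
  have br: "in_H (sbr X (gen j))" if "j < 7" for j
    using X in_H_gen[OF that] by (simp add: ChH_def GammaH_iff_in_H)
  define f where "f i = X (free_coord ! i)" for i
  have f0: "f 0 = X 0" by (simp add: f_def free_coord_def)
  have supp: "supported (f i)" if "i < 7" for i
    using iX that by (simp add: f_def in_H_def SF_supported)
  have levi: "(\<Sum>i<7. smult (f i) (H_defect (hbr (gen_parity ! i) 0 (gen i) (gen j)) m) S x) = 0"
    if "j = 1 \<or> j = 2" "m \<in> {4, 8, 9}" for j m S x
  proof -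
    have "j < 7" "m \<in> dep_coords" using that by (auto simp: dep_coords_def)
    then show ?thesis using Levi_relation[OF iX that(1) br] by (simp add: f_def)
  qed
  have sconst_right: "smult (f i) (sconst c) S x = c * f i S x" if "i < 7" for i c S x
    using smult_sconst_right[OF supp[OF that]] by simp
  have sscale_right: "smult F (sscale c G) = (\<lambda>S x. c * smult F G S x)" for F G c
    by (simp add: sscale_def smult_cmult_right)
  have sum7: "(\<Sum>i<(7::nat). F i) = F 0 + F 1 + F 2 + F 3 + F 4 + F 5 + F 6" for F :: "nat \<Rightarrow> complex"
    by (simp add: numeral_eq_Suc add.assoc)
  note eqs = sum7 H_defect_hbr_gen_Dlam H_defect_hbr_gen_Dy sscale_right sconst_right
  have "f 1 S x = smult (f 0) (sscale (-1) c_lam) S x" for S x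
    using levi[of 2 4 S x] by (simp add: eqs eqs[simplified])
  moreover have "f 2 S x = 0" for S x
    using levi[of 1 4 S x] by (simp add: eqs eqs[simplified])
  moreover have "f 3 S x = smult (f 0) (sscale (-1) c_th) S x" for S x
    using levi[of 2 9 S x] by (simp add: eqs eqs[simplified]) (simp add: eq_neg_iff_add_eq_0 add.commute)
  moreover have "f 4 S x = smult (f 0) (sscale (-1) c_ph) S x" for S x
    using levi[of 2 8 S x] by (simp add: eqs eqs[simplified])
  moreover have "f 5 S x = 0" "f 6 S x = 0" for S x
    using levi[of 1 9 S x] levi[of 1 8 S x] by (simp_all add: eqs eqs[simplified])
  moreover have "f 0 = smult (f 0) (sconst 1)"
    using smult_sconst_right[OF supp[of 0]] by simp
  ultimately show ?thesis
    using l unfolding less_7_cases f_def[symmetric] f0[symmetric]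
    by (elim disjE) (simp_all add: fun_eq_iff free_coord_def Cfield_free_coord Cfield_free_coord[simplified])
qed

lemma ChH_eq_vscale_Cfield:
  assumes "X \<in> ChH"
  shows "X 0 \<in> SF" "X = vscale (X 0) Cfield"
proof -
  have iX: "in_H X" using assms by (simp add: ChH_def GammaH_iff_in_H)
  then show X0: "X 0 \<in> SF"
    by (auto simp: in_H_def free_coord_def dest: spec[of _ 0])
  show "X = vscale (X 0) Cfield"
    using iX in_H_vscale[OF in_H_Cfield X0] ChH_free_coord[OF assms]
    by (intro in_H_eqI) (simp_all add: vscale_def)
qed

theorem proposition4p12:
  shows "ChH = {vscale f Cfield | f. f \<in> SF}"
  using vscale_Cfield_in_ChH ChH_eq_vscale_Cfield by blast

end
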